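(* For any constant $\epsilon\in(0,1)$ and any $\alpha\in(0,1)$, IPR with $\rho=4$ is a $(2+2/\alpha)$-robust partitioning algorithm.
   Context: Scheduling with Speed Predictions (SSP). An instance consists of $n$ jobs with processing times $p_1,\dots,p_n\ge0$ and $m$ machines with true speeds $s_1,\dots,s_m>0$; job $j$ on machine $i$ takes time $p_j/s_i$. For a bag $B$, $p(B)=\sum_{j\in B}p_j$. In the partitioning stage the algorithm receives $\mathbf p$ and predicted speeds $\hat{\mathbf s}\ge0$ (not $\mathbf s$) and partitions $[n]$ into $m$ possibly empty bags. In the scheduling stage $\mathbf s$ is revealed and each bag is assigned whole to a machine; the makespan is $\max_i(\text{total processing time on } i)/s_i$. $opt(\mathbf p,\mathbf s)$ is the minimum makespan of assigning individual jobs knowing $\mathbf s$. A partitioning algorithm is $\beta$-robust if, for all $\mathbf p,\hat{\mathbf s},\mathbf s$, the two-stage algorithm that runs it and then assigns the bags to the machines with minimum possible makespan has makespan at most $\beta\cdot opt(\mathbf p,\mathbf s)$. Algorithm IPR. Input: predicted speeds $\hat s_1\ge\dots\ge\hat s_m$, $\mathbf p$, $\alpha$, accuracy $\epsilon\in(0,1)$, $\rho\ge1$. (1) Compute a partition $B_1,\dots,B_m$ with $p(B_1)\ge\dots\ge p(B_m)$ such that putting $B_i$ on machine $i$ has makespan at most $(1+\epsilon)opt(\mathbf p,\hat{\mathbf s})$ under speeds $\hat{\mathbf s}$. (2) Set $\overline{OPT}_C=\max_i p(B_i)/\hat s_i$ and $\mathcal M_i=\{B_i\}$. (3) While $\max\{p(B):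 B\in\cup_i\mathcal M_i, |B|\ge2\}>\rho\min\{p(B):B\in\cup_i\mathcal M_i\}$: compute $\mathcal M'=$ LPT-Rebalance$(\mathcal M)$; if $\max_i\sum_{B\in\mathcal M'_i}p(B)/\hat s_i>(1+\alpha)\overline{OPT}_C$ return the current bags $\cup_i\mathcal M_i$; else $\mathcal M\leftarrow\mathcal M'$. (4) Return the bags $\cup_i\mathcal M_i$. LPT-Rebalance: let $B_{\min}$ be a bag of minimum $p(B)$ over all bags, $\mathcal M_{\min}$ its collection, $\mathcal M_{\max}$ a collection containing a bag of maximum $p(B)$ among bags with at least two jobs. Move $B_{\min}$ into $\mathcal M_{\max}$, let $\ell=|\mathcal M_{\max}|$, pool its jobs and redistribute them into $\ell$ new bags by LPT (jobs in non-increasing processing time, each into a currently least-loaded bag); these form the new $\mathcal M_{\max}$. *)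

theory Defs
  imports Complex_Main "HOL-Library.FuncSet" "HOL-Library.Extended_Real"
begin

text \<open>Jobs are 0..<n with processing times p, machines are 0..<m.
  Bags are sets of job indices.\<close>

definition psum :: "(nat \<Rightarrow> real) \<Rightarrow> nat set \<Rightarrow> real" where
  "psum p B = (\<Sum>j\<in>B. p j)"

text \<open>Completion time of a load x on a machine of speed y (y may be 0 for
  predicted speeds: then any positive load takes infinite time).\<close>
definition ratio :: "real \<Rightarrow> real \<Rightarrow> ereal" where
  "ratio x y = (if y = 0 then (if x = 0 then 0 else \<infinity>) else ereal (x / y))"

definition opt :: "(nat \<Rightarrow> real) \<Rightarrow> (nat \<Rightarrow> real) \<Rightarrow> nat \<Rightarrow> nat \<Rightarrow> ereal" where
  "opt p s n m = Min ((\<lambda>f. Max ((\<lambda>i. ratio (\<Sum>j\<in>{j. j < n \<and> f j = i}. p j) (s i)) ` {0..<m}))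
                     ` ({0..<n} \<rightarrow>\<^sub>E {0..<m}))"

definition opt_bags :: "(nat \<Rightarrow> real) \<Rightarrow> (nat \<Rightarrow> real) \<Rightarrow> nat \<Rightarrow> nat set list \<Rightarrow> ereal" where
  "opt_bags p s m bags = Min ((\<lambda>g. Max ((\<lambda>i. ratio (\<Sum>b\<in>{b. b < length bags \<and> g b = i}. psum p (bags ! b)) (s i)) ` {0..<m}))
                     ` ({0..<length bags} \<rightarrow>\<^sub>E {0..<m}))"

text \<open>LPT: jobs in the given order, each into a currently least-loaded bag (ties arbitrary).\<close>
inductive lpt_place :: "(nat \<Rightarrow> real) \<Rightarrow> nat set list \<Rightarrow> nat list \<Rightarrow> nat set list \<Rightarrow> bool" where
  lpt_nil: "lpt_place p bags [] bags"
| lpt_cons: "\<lbrakk> k < length bags; \<forall>k'<length bags. psum p (bags ! k) \<le> psum p (bags ! k');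
              lpt_place p (bags[k := insert j (bags ! k)]) js bags' \<rbrakk>
             \<Longrightarrow> lpt_place p bags (j # js) bags'"

definition lpt :: "(nat \<Rightarrow> real) \<Rightarrow> nat set \<Rightarrow> nat \<Rightarrow> nat set list \<Rightarrow> bool" where
  "lpt p pool l res \<longleftrightarrow> (\<exists>js. distinct js \<and> set js = pool \<and> sorted_wrt (\<lambda>a b. p a \<ge> p b) js
                           \<and> lpt_place p (replicate l {}) js res)"

text \<open>A state: for each k < m (machine with k-th largest predicted speed) a list
  (collection) of bags. Bag positions and bags:\<close>
definition bagpos :: "nat \<Rightarrow> (nat \<Rightarrow> nat set list) \<Rightarrow> (nat \<times> nat) set" where
  "bagpos m M = {(k, t). k < m \<and> t < length (M k)}"

definition bag :: "(nat \<Rightarrow> nat set list) \<Rightarrow> nat \<times> nat \<Rightarrow> nat set" where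
  "bag M q = M (fst q) ! snd q"

definition all_bags :: "nat \<Rightarrow> (nat \<Rightarrow> nat set list) \<Rightarrow> nat set list" where
  "all_bags m M = concat (map M [0..<m])"

definition loop_cond :: "(nat \<Rightarrow> real) \<Rightarrow> nat \<Rightarrow> real \<Rightarrow> (nat \<Rightarrow> nat set list) \<Rightarrow> bool" where
  "loop_cond p m \<rho> M \<longleftrightarrow>
     (let P = bagpos m M; Big = {q \<in> P. card (bag M q) \<ge> 2} in
        Big \<noteq> {} \<and> Max ((\<lambda>q. psum p (bag M q)) ` Big) > \<rho> * Min ((\<lambda>q. psum p (bag M q)) ` P))"

definition remove_nth :: "nat \<Rightarrow> 'a list \<Rightarrow> 'a list" where
  "remove_nth t xs = take t xs @ drop (Suc t) xs"

definition lpt_rebalance :: "(nat \<Rightarrow> real) \<Rightarrow> nat \<Rightarrow> (nat \<Rightarrow> nat set list) \<Rightarrow> (nat \<Rightarrow> nat set list) \<Rightarrow> bool" where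
  "lpt_rebalance p m M M' \<longleftrightarrow>
     (\<exists>k0 t0 k1 t1 NB.
        let P = bagpos m M in
        (k0, t0) \<in> P \<and> (\<forall>q\<in>P. psum p (bag M (k0, t0)) \<le> psum p (bag M q)) \<and>
        (k1, t1) \<in> P \<and> card (bag M (k1, t1)) \<ge> 2 \<and>
        (\<forall>q\<in>P. card (bag M q) \<ge> 2 \<longrightarrow> psum p (bag M q) \<le> psum p (bag M (k1, t1))) \<and>
        (let Bmin = bag M (k0, t0);
             Mr = M(k0 := remove_nth t0 (M k0));
             pool = Bmin \<union> \<Union> (set (Mr k1));
             l = length (Mr k1) + 1
         in lpt p pool l NB \<and> M' = Mr(k1 := NB)))"

definition pred_makespan :: "(nat \<Rightarrow> real) \<Rightarrow> nat \<Rightarrow> (nat \<Rightarrow> real) \<Rightarrow> (nat \<Rightarrow> nat set list) \<Rightarrow> ereal" where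
  "pred_makespan p m sh M = Max ((\<lambda>k. ratio (sum_list (map (psum p) (M k))) (sh k)) ` {0..<m})"

text \<open>Step (3)/(4): terminating runs of the while loop and their outputs.\<close>
inductive ipr_loop :: "(nat \<Rightarrow> real) \<Rightarrow> nat \<Rightarrow> (nat \<Rightarrow> real) \<Rightarrow> real \<Rightarrow> real \<Rightarrow> ereal
                        \<Rightarrow> (nat \<Rightarrow> nat set list) \<Rightarrow> nat set list \<Rightarrow> bool" where
  loop_stop: "\<not> loop_cond p m \<rho> M \<Longrightarrow> ipr_loop p m sh \<alpha> \<rho> oc M (all_bags m M)"
| loop_reject: "\<lbrakk> loop_cond p m \<rho> M; lpt_rebalance p m M M';
                  pred_makespan p m sh M' > ereal (1 + \<alpha>) * oc \<rbrakk>
                \<Longrightarrow> ipr_loop p m sh \<alpha> \<rho> oc M (all_bags m M)"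
| loop_step: "\<lbrakk> loop_cond p m \<rho> M; lpt_rebalance p m M M';
                \<not> pred_makespan p m sh M' > ereal (1 + \<alpha>) * oc;
                ipr_loop p m sh \<alpha> \<rho> oc M' out \<rbrakk>
              \<Longrightarrow> ipr_loop p m sh \<alpha> \<rho> oc M out"

text \<open>IPR on sorted predicted speeds sh (sh 0 >= sh 1 >= ...), optv = opt(p, predicted speeds).\<close>
definition ipr_core :: "(nat \<Rightarrow> real) \<Rightarrow> nat \<Rightarrow> nat \<Rightarrow> (nat \<Rightarrow> real) \<Rightarrow> ereal
                        \<Rightarrow> real \<Rightarrow> real \<Rightarrow> real \<Rightarrow> nat set list \<Rightarrow> bool" where
  "ipr_core p n m sh optv \<alpha> \<epsilon> \<rho> out \<longleftrightarrow>
     (\<exists>B :: nat \<Rightarrow> nat set.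
        (\<forall>i<m. B i \<subseteq> {0..<n}) \<and> (\<forall>i<m. \<forall>k<m. i \<noteq> k \<longrightarrow> B i \<inter> B k = {}) \<and>
        (\<Union>i\<in>{0..<m}. B i) = {0..<n} \<and>
        (\<forall>i k. i \<le> k \<and> k < m \<longrightarrow> psum p (B i) \<ge> psum p (B k)) \<and>
        Max ((\<lambda>i. ratio (psum p (B i)) (sh i)) ` {0..<m}) \<le> ereal (1 + \<epsilon>) * optv \<and>
        ipr_loop p m sh \<alpha> \<rho> (Max ((\<lambda>i. ratio (psum p (B i)) (sh i)) ` {0..<m})) (\<lambda>i. [B i]) out)"

definition ipr :: "(nat \<Rightarrow> real) \<Rightarrow> nat \<Rightarrow> nat \<Rightarrow> (nat \<Rightarrow> real) \<Rightarrow> real \<Rightarrow> real \<Rightarrow> real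
                   \<Rightarrow> nat set list \<Rightarrow> bool" where
  "ipr p n m shat \<alpha> \<epsilon> \<rho> out \<longleftrightarrow>
     (\<exists>\<pi>. bij_betw \<pi> {0..<m} {0..<m} \<and> (\<forall>i k. i \<le> k \<and> k < m \<longrightarrow> shat (\<pi> i) \<ge> shat (\<pi> k)) \<and>
          ipr_core p n m (shat \<circ> \<pi>) (opt p shat n m) \<alpha> \<epsilon> \<rho> out)"

text \<open>beta-robustness of a (nondeterministic) partitioning algorithm, given as a relation
  alg p n m shat bags ("bags is a possible output").\<close>
definition robust :: "((nat \<Rightarrow> real) \<Rightarrow> nat \<Rightarrow> nat \<Rightarrow> (nat \<Rightarrow> real) \<Rightarrow> nat set list \<Rightarrow> bool)
                      \<Rightarrow> real \<Rightarrow> bool" where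
  "robust alg \<beta> \<longleftrightarrow>
     (\<forall>p n m shat s bags. 1 \<le> m \<and> (\<forall>j<n. p j \<ge> 0) \<and> (\<forall>i<m. shat i \<ge> 0) \<and> (\<forall>i<m. s i > 0)
        \<and> alg p n m shat bags \<longrightarrow> opt_bags p s m bags \<le> ereal \<beta> * opt p s n m)"

end

theory Submission
  imports Defs
begin

text \<open>Write \<open>T = OPT\<^sub>C\<close> for the predicted makespan of the initial partition and \<open>a = 1 + \<alpha>\<close>.
  Accepted rebalancing steps preserve an invariant: each collection \<open>k\<close> has load at most
  \<open>a \<cdot> T \<cdot> sh k\<close>; the bags of a collection are \<open>2\<close>-balanced, being the output of one LPT run;
  and the load of a collection exceeds \<open>T \<cdot> sh k\<close> by at most the minimum bag size for each bag
  beyond its first. The minimum bag size never decreases, because LPT applied to a minimum bag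
  \<open>\<mu>\<close> together with bags larger than \<open>2\<mu>\<close> yields bags of size at least \<open>\<mu>\<close>.

  If the loop ends because its condition fails, every bag with two or more jobs is at most
  \<open>4\<close> times every bag. If it ends because a step would overload the receiving collection \<open>k\<close>
  with \<open>l\<close> bags, then \<open>a \<cdot> T \<cdot> sh k < \<mu> + load k \<le> T \<cdot> sh k + l \<cdot> \<mu>\<close>, while the largest
  multi-job bag \<open>D\<close> lies in \<open>k\<close> and satisfies \<open>l \<cdot> D \<le> 2 \<cdot> load k \<le> 2a \<cdot> T \<cdot> sh k\<close>; hence
  \<open>D \<le> 2a/(a - 1) \<cdot> \<mu> = (2 + 2/\<alpha>) \<cdot> \<mu>\<close>.

  Finally, \<open>m\<close> bags in which every multi-job bag is at most \<open>c \<ge> 2\<close> times every bag can be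
  scheduled within \<open>c\<close> times the optimal makespan: take the bags by non-increasing size and
  put each on a machine whose load stays within \<open>c\<close> times the load of that machine in an
  optimal schedule. A volume count shows that such a machine exists unless all bags placed so
  far are single jobs, and single jobs fit on the machines the optimal schedule uses for them.\<close>

section \<open>Bags and their processing times\<close>

definition bag_count :: "nat \<Rightarrow> nat set list \<Rightarrow> nat" where
  "bag_count j bs = length (filter (\<lambda>B. j \<in> B) bs)"

lemma bag_count_Nil [simp]: "bag_count j [] = 0"
  by (simp add: bag_count_def)

lemma bag_count_Cons [simp]: "bag_count j (B # bs) = of_bool (j \<in> B) + bag_count j bs"
  by (simp add: bag_count_def)

lemma bag_count_append [simp]: "bag_count j (bs @ cs) = bag_count j bs + bag_count j cs"
  by (simp add: bag_count_def)

lemma bag_count_eq_0_iff: "bag_count j bs = 0 \<longleftrightarrow> (\<forall>B\<in>set bs. j \<notin> B)"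
  by (induction bs) auto

lemma bag_count_conv_sum: "bag_count j bs = (\<Sum>t<length bs. of_bool (j \<in> bs ! t))"
  by (induction bs) (simp_all add: sum.lessThan_Suc_shift del: sum.lessThan_Suc)

lemma bag_count_list_update:
  "k < length bs \<Longrightarrow> bag_count j (bs[k := B]) + of_bool (j \<in> bs ! k) = bag_count j bs + of_bool (j \<in> B)"
proof (induction bs arbitrary: k)
  case (Cons C bs)
  then show ?case by (cases k) auto
qed simp

lemma bag_count_remove_nth:
  "t < length bs \<Longrightarrow> bag_count j (remove_nth t bs) + of_bool (j \<in> bs ! t) = bag_count j bs"
  by (subst (3) id_take_nth_drop[of t bs]) (simp_all add: remove_nth_def)

lemma sum_list_map_remove_nth:
  fixes f :: "'a \<Rightarrow> 'b::comm_monoid_add"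
  shows "t < length xs \<Longrightarrow> sum_list (map f (remove_nth t xs)) + f (xs ! t) = sum_list (map f xs)"
  by (subst (3) id_take_nth_drop[of t xs]) (simp_all add: remove_nth_def ac_simps)

lemma length_remove_nth: "t < length xs \<Longrightarrow> length (remove_nth t xs) = length xs - 1"
  by (simp add: remove_nth_def)

lemma set_remove_nth_subset: "set (remove_nth t xs) \<subseteq> set xs"
  by (auto simp: remove_nth_def dest: in_set_takeD in_set_dropD)

lemma psum_insert: "finite B \<Longrightarrow> j \<notin> B \<Longrightarrow> psum p (insert j B) = p j + psum p B"
  by (simp add: psum_def)

lemma psum_mono: "finite B \<Longrightarrow> A \<subseteq> B \<Longrightarrow> \<forall>j\<in>B. 0 \<le> p j \<Longrightarrow> psum p A \<le> psum p B"
  unfolding psum_def by (rule sum_mono2) auto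

lemma psum_nonneg: "\<forall>j\<in>B. 0 \<le> p j \<Longrightarrow> 0 \<le> psum p B"
  unfolding psum_def by (rule sum_nonneg) auto

lemma psum_pair_le:
  "finite B \<Longrightarrow> i \<in> B \<Longrightarrow> j \<in> B \<Longrightarrow> i \<noteq> j \<Longrightarrow> \<forall>k\<in>B. 0 \<le> p k \<Longrightarrow> p i + p j \<le> psum p B"
  using psum_mono[of B "{i, j}" p] by (simp add: psum_def)

lemma psum_conv_sum:
  "finite U \<Longrightarrow> B \<subseteq> U \<Longrightarrow> psum p B = (\<Sum>j\<in>U. p j * of_bool (j \<in> B))"
  by (simp add: psum_def sum.inter_restrict[symmetric] Int_absorb1 flip: of_bool_def)

lemma sum_list_psum_conv_sum:
  assumes "finite U" "\<forall>B\<in>set bs. B \<subseteq> U"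
  shows "sum_list (map (psum p) bs) = (\<Sum>j\<in>U. p j * bag_count j bs)"
  using assms(2)
  by (induction bs) (simp_all add: psum_conv_sum[OF assms(1)] sum.distrib algebra_simps)

lemma min_psum_le_psum_min:
  assumes "finite B" "\<forall>j\<in>B. 0 \<le> p j" "0 \<le> \<kappa>"
  shows "min (psum p B) \<kappa> \<le> psum (\<lambda>j. min (p j) \<kappa>) B"
  using assms
proof (induction B rule: finite_induct)
  case empty
  then show ?case by (simp add: psum_def)
next
  case (insert a B)
  have "0 \<le> psum p B" "0 \<le> p a"
    using insert.prems psum_nonneg by auto
  then have "min (p a + psum p B) \<kappa> \<le> min (p a) \<kappa> + min (psum p B) \<kappa>"
    using \<open>0 \<le> \<kappa>\<close> by (simp add: min_def)
  then show ?case using insert by (simp add: psum_insert)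
qed


lemma psum_min_le: "psum (\<lambda>j. min (p j) \<kappa>) B \<le> psum p B"
  unfolding psum_def by (rule sum_mono) simp

lemma sum_list_le_length_mult:
  fixes f :: "'a \<Rightarrow> real" and c :: real
  shows "\<forall>x\<in>set xs. f x \<le> c \<Longrightarrow> sum_list (map f xs) \<le> length xs * c"
  by (induction xs) (auto simp: algebra_simps)

lemma length_mult_le_sum_list:
  fixes f :: "'a \<Rightarrow> real" and c :: real
  shows "\<forall>x\<in>set xs. c \<le> f x \<Longrightarrow> length xs * c \<le> sum_list (map f xs)"
  by (induction xs) (auto simp: algebra_simps)

lemma capped_psum_lower:
  fixes \<kappa> :: real
  assumes G0: "finite G0" "\<forall>j\<in>G0. 0 \<le> p j" "\<mu> \<le> psum p G0"
    and gs: "\<forall>G\<in>set gs. finite G \<and> (\<forall>j\<in>G. 0 \<le> p j) \<and> \<kappa> \<le> psum p G"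
    and "0 \<le> \<mu>" "\<mu> \<le> \<kappa>"
  shows "\<mu> + length gs * \<kappa> \<le> psum (\<lambda>j. min (p j) \<kappa>) G0 + sum_list (map (psum (\<lambda>j. min (p j) \<kappa>)) gs)"
proof -
  have "\<kappa> \<le> psum (\<lambda>j. min (p j) \<kappa>) G" if "G \<in> set gs" for G
    using min_psum_le_psum_min[of G p \<kappa>] gs that assms(5,6) by (simp add: min_absorb2)
  then have "length gs * \<kappa> \<le> sum_list (map (psum (\<lambda>j. min (p j) \<kappa>)) gs)"
    by (intro length_mult_le_sum_list) blast
  moreover have "\<mu> \<le> psum (\<lambda>j. min (p j) \<kappa>) G0"
    using min_psum_le_psum_min[OF G0(1,2), of \<kappa>] G0(3) assms(5,6) by linarith
  ultimately show ?thesis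
    by linarith
qed

lemma sum_fun_upd_add:
  fixes f :: "'a \<Rightarrow> 'b::comm_monoid_add" and M :: "nat \<Rightarrow> 'a"
  assumes "k < m"
  shows "(\<Sum>i<m. f ((M(k := v)) i)) + f (M k) = (\<Sum>i<m. f (M i)) + f v"
proof -
  have remove: "(\<Sum>i<m. F i) = F k + (\<Sum>i\<in>{..<m} - {k}. F i)" for F :: "nat \<Rightarrow> 'b"
    using assms by (intro sum.remove) auto
  have "(\<Sum>i\<in>{..<m} - {k}. f ((M(k := v)) i)) = (\<Sum>i\<in>{..<m} - {k}. f (M i))"
    by (intro sum.cong) auto
  then show ?thesis
    using remove[of "\<lambda>i. f ((M(k := v)) i)"] remove[of "\<lambda>i. f (M i)"] by (simp add: ac_simps)
qed

definition bag_partition :: "nat \<Rightarrow> nat \<Rightarrow> nat set list \<Rightarrow> bool" where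
  "bag_partition n m bs \<longleftrightarrow> length bs = m \<and> (\<forall>j. bag_count j bs = of_bool (j < n))"

lemma bag_partition_subset:
  assumes "bag_partition n m bs" "B \<in> set bs"
  shows "B \<subseteq> {..<n}"
proof
  fix j assume "j \<in> B"
  then have "bag_count j bs \<noteq> 0"
    using assms(2) bag_count_eq_0_iff by blast
  then show "j \<in> {..<n}"
    using assms(1) unfolding bag_partition_def by (metis lessThan_iff of_bool_eq(1))
qed

lemma bag_partition_nth_subset: "bag_partition n m bs \<Longrightarrow> t < m \<Longrightarrow> bs ! t \<subseteq> {..<n}"
  using bag_partition_subset nth_mem unfolding bag_partition_def by blast

lemma bag_partition_disjoint:
  assumes "bag_partition n m bs" "t < m" "u < m" "t \<noteq> u"
  shows "bs ! t \<inter> bs ! u = {}"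
proof (rule ccontr)
  assume "bs ! t \<inter> bs ! u \<noteq> {}"
  then obtain j where "j \<in> bs ! t" "j \<in> bs ! u"
    by blast
  then have "(\<Sum>v\<in>{t, u}. of_bool (j \<in> bs ! v)) \<le> bag_count j bs"
    unfolding bag_count_conv_sum using assms by (intro sum_mono2) (auto simp: bag_partition_def)
  then have "2 \<le> bag_count j bs"
    using \<open>j \<in> bs ! t\<close> \<open>j \<in> bs ! u\<close> assms(4) by simp
  moreover have "bag_count j bs \<le> 1"
    using assms(1) by (simp add: bag_partition_def of_bool_def)
  ultimately show False
    by simp
qed

lemma bag_partition_psum_nonneg:
  "bag_partition n m bs \<Longrightarrow> \<forall>j<n. 0 \<le> p j \<Longrightarrow> B \<in> set bs \<Longrightarrow> 0 \<le> psum p B"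
  using bag_partition_subset by (metis lessThan_iff psum_nonneg subsetD)

lemma sum_psum_bag_partition:
  assumes "bag_partition n m bs"
  shows "(\<Sum>t<m. psum p (bs ! t)) = (\<Sum>j<n. p j)"
proof -
  have "(\<Sum>t<m. psum p (bs ! t)) = sum_list (map (psum p) bs)"
    using assms by (simp add: bag_partition_def sum_list_sum_nth atLeast0LessThan)
  also have "\<dots> = (\<Sum>j<n. p j * bag_count j bs)"
    using bag_partition_subset[OF assms] by (intro sum_list_psum_conv_sum) auto
  finally show ?thesis
    using assms by (simp add: bag_partition_def)
qed

lemma bag_partition_psum_UN:
  assumes partition: "bag_partition n m bs" and A: "A \<subseteq> {..<m}"
  shows "(\<Sum>t\<in>A. psum p (bs ! t)) = psum p (\<Union>t\<in>A. bs ! t)"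
proof -
  have "finite (bs ! t)" if "t \<in> A" for t
    using bag_partition_nth_subset[OF partition] A that finite_subset by blast
  moreover have "bs ! t \<inter> bs ! u = {}" if "t \<in> A" "u \<in> A" "t \<noteq> u" for t u
    using bag_partition_disjoint[OF partition] A that by blast
  ultimately show ?thesis
    unfolding psum_def using A by (intro sum.UNION_disjoint[symmetric]) (auto intro: finite_subset)
qed

definition bags_balanced :: "(nat \<Rightarrow> real) \<Rightarrow> real \<Rightarrow> nat set list \<Rightarrow> bool" where
  "bags_balanced p c bs \<longleftrightarrow> (\<forall>A\<in>set bs. \<forall>B\<in>set bs. 2 \<le> card A \<longrightarrow> psum p A \<le> c * psum p B)"

lemma bags_balanced_mono:
  "bags_balanced p c bs \<Longrightarrow> c \<le> c' \<Longrightarrow> \<forall>B\<in>set bs. 0 \<le> psum p B \<Longrightarrow> bags_balanced p c' bs"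
  unfolding bags_balanced_def by (meson mult_right_mono order_trans)

lemma bags_balanced_subset:
  "bags_balanced p c bs \<Longrightarrow> set bs' \<subseteq> set bs \<Longrightarrow> bags_balanced p c bs'"
  unfolding bags_balanced_def by blast

lemma bags_balanced_length_mult_le:
  assumes "bags_balanced p c bs" "A \<in> set bs" "2 \<le> card A"
  shows "length bs * psum p A \<le> c * sum_list (map (psum p) bs)"
proof -
  have "length bs * psum p A \<le> sum_list (map (\<lambda>B. c * psum p B) bs)"
    using assms unfolding bags_balanced_def by (intro length_mult_le_sum_list) blast
  then show ?thesis
    by (simp add: sum_list_const_mult)
qed

lemma set_all_bags: "set (all_bags m M) = (\<Union>k<m. set (M k))"
  by (auto simp: all_bags_def)

lemma length_all_bags: "length (all_bags m M) = (\<Sum>k<m. length (M k))"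
  by (induction m) (auto simp: all_bags_def)

lemma bag_count_all_bags: "bag_count j (all_bags m M) = (\<Sum>k<m. bag_count j (M k))"
  by (induction m) (auto simp: all_bags_def)

section \<open>Longest processing time first\<close>

lemma lpt_place_length: "lpt_place p bags js bags' \<Longrightarrow> length bags' = length bags"
  by (induction rule: lpt_place.induct) auto

lemma lpt_place_subset:
  "lpt_place p bags js bags' \<Longrightarrow> k < length bags \<Longrightarrow> bags ! k \<subseteq> bags' ! k \<and> bags' ! k \<subseteq> bags ! k \<union> set js"
proof (induction arbitrary: k rule: lpt_place.induct)
  case (lpt_cons k0 bags p j js bags')
  then show ?case by (cases "k = k0") fastforce+
qed simp

lemma lpt_place_bag_count:
  "lpt_place p bags js bags' \<Longrightarrow> distinct js \<Longrightarrow> \<forall>j\<in>set js. bag_count j bags = 0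
   \<Longrightarrow> bag_count j bags' = bag_count j bags + of_bool (j \<in> set js)"
proof (induction arbitrary: j rule: lpt_place.induct)
  case (lpt_cons k bags p j0 js bags')
  let ?bags1 = "bags[k := insert j0 (bags ! k)]"
  have update: "bag_count x ?bags1 + of_bool (x \<in> bags ! k) = bag_count x bags + of_bool (x \<in> insert j0 (bags ! k))" for x
    using bag_count_list_update lpt_cons.hyps(1) by blast
  have not_in: "x \<notin> bags ! k" if "bag_count x bags = 0" for x
    using that bag_count_eq_0_iff lpt_cons.hyps(1) nth_mem by blast
  have "\<forall>x\<in>set js. bag_count x ?bags1 = 0"
  proof
    fix x assume "x \<in> set js"
    then have "x \<noteq> j0" "bag_count x bags = 0"
      using lpt_cons.prems by auto
    then show "bag_count x ?bags1 = 0"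
      using update[of x] not_in[of x] by simp
  qed
  then have IH: "bag_count j bags' = bag_count j ?bags1 + of_bool (j \<in> set js)"
    using lpt_cons.IH lpt_cons.prems(1) by simp
  show ?case
  proof (cases "j = j0")
    case True
    then have "bag_count j bags = 0" "j \<notin> set js"
      using lpt_cons.prems by auto
    then show ?thesis using IH update[of j] not_in[of j] True by simp
  next
    case False
    then show ?thesis using IH update[of j] by simp
  qed
qed simp

lemma lpt_place_psum_mono:
  assumes "lpt_place p bags js bags'" "k < length bags" "finite (bags ! k)"
    "\<forall>j\<in>set js \<union> bags ! k. 0 \<le> p j"
  shows "psum p (bags ! k) \<le> psum p (bags' ! k)"
proof (rule psum_mono)
  have "bags ! k \<subseteq> bags' ! k" "bags' ! k \<subseteq> bags ! k \<union> set js"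
    using lpt_place_subset[OF assms(1,2)] by blast+
  then show "finite (bags' ! k)" "bags ! k \<subseteq> bags' ! k" "\<forall>j\<in>bags' ! k. 0 \<le> p j"
    using assms(3,4) finite_subset by blast+
qed

text \<open>The job that entered a bag last is its smallest one, and just before it entered the bag
  was a least loaded one; since loads only grow, removing that job leaves at most the final
  load of any other bag.\<close>

lemma lpt_place_last_job:
  "lpt_place p bags js bags' \<Longrightarrow> sorted_wrt (\<lambda>a b. p a \<ge> p b) js \<Longrightarrow> distinct js \<Longrightarrow>
   \<forall>k<length bags. finite (bags ! k) \<and> set js \<inter> bags ! k = {} \<Longrightarrow>
   \<forall>B\<in>set bags. \<forall>i\<in>B. \<forall>j\<in>set js. p j \<le> p i \<Longrightarrow>
   \<forall>j\<in>set js \<union> \<Union>(set bags). 0 \<le> p j \<Longrightarrow>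
   k < length bags \<Longrightarrow> bags' ! k \<noteq> bags ! k \<Longrightarrow>
   \<exists>j\<in>bags' ! k. (\<forall>i\<in>bags' ! k. p j \<le> p i) \<and> (\<forall>k'<length bags. psum p (bags' ! k) - p j \<le> psum p (bags' ! k'))"
proof (induction arbitrary: k rule: lpt_place.induct)
  case (lpt_cons k0 bags p j0 js bags')
  let ?bags1 = "bags[k0 := insert j0 (bags ! k0)]"
  have nth_bags1: "?bags1 ! k = (if k = k0 then insert j0 (bags ! k0) else bags ! k)" if "k < length bags" for k
    using that lpt_cons.hyps(1) by simp
  have len: "length ?bags1 = length bags"
    by simp
  have disjoint1: "\<forall>k<length ?bags1. finite (?bags1 ! k) \<and> set js \<inter> ?bags1 ! k = {}"
    using lpt_cons.prems(2,3) nth_bags1 by auto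
  have smaller1: "\<forall>B\<in>set ?bags1. \<forall>i\<in>B. \<forall>j\<in>set js. p j \<le> p i"
  proof (intro ballI)
    fix B i j assume "B \<in> set ?bags1" "i \<in> B" "j \<in> set js"
    then obtain k' where "k' < length bags" "i \<in> ?bags1 ! k'"
      by (auto simp: in_set_conv_nth)
    then have "i = j0 \<or> i \<in> \<Union>(set bags)"
      using nth_bags1 by (auto split: if_splits)
    then show "p j \<le> p i"
      using lpt_cons.prems(1,4) \<open>j \<in> set js\<close> by auto
  qed
  have nonneg1: "\<forall>j\<in>set js \<union> \<Union>(set ?bags1). 0 \<le> p j"
  proof -
    have "\<Union>(set ?bags1) \<subseteq> insert j0 (\<Union>(set bags))"
      using set_update_subset_insert[of bags k0 "insert j0 (bags ! k0)"] lpt_cons.hyps(1) by auto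
    then show ?thesis
      using lpt_cons.prems(5) by auto
  qed
  have grow: "psum p (bags ! k') \<le> psum p (bags' ! k')" if "k' < length bags" for k'
  proof (rule lpt_place_psum_mono[OF lpt_place.lpt_cons[OF lpt_cons.hyps(1-3)] that])
    have "bags ! k' \<in> set bags"
      using that by simp
    then show "\<forall>j\<in>set (j0 # js) \<union> bags ! k'. 0 \<le> p j"
      using lpt_cons.prems(5) by blast
  qed (use lpt_cons.prems(3) that in blast)
  show ?case
  proof (cases "bags' ! k = ?bags1 ! k")
    case False
    have "sorted_wrt (\<lambda>a b. p a \<ge> p b) js" "distinct js"
      using lpt_cons.prems(1,2) by simp_all
    then show ?thesis
      using lpt_cons.IH[OF _ _ disjoint1 smaller1 nonneg1, of k] False lpt_cons.prems(6) len by simp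
  next
    case True
    then have k: "k = k0" and last: "bags' ! k = insert j0 (bags ! k0)"
      using lpt_cons.prems(7) nth_bags1[OF lpt_cons.prems(6)] by (auto split: if_splits)
    have "psum p (bags' ! k) - p j0 = psum p (bags ! k0)"
      using last lpt_cons.prems(2,3) lpt_cons.hyps(1) by (simp add: psum_insert)
    moreover have "p j0 \<le> p i" if "i \<in> bags' ! k" for i
      using that last lpt_cons.prems(4) lpt_cons.hyps(1) by (auto dest: nth_mem)
    moreover have "psum p (bags ! k0) \<le> psum p (bags' ! k')" if "k' < length bags" for k'
      using lpt_cons.hyps(2) grow that order_trans by blast
    ultimately show ?thesis using last by auto
  qed
qed simp

context
  fixes p :: "nat \<Rightarrow> real" and pool :: "nat set" and l :: nat and NB :: "nat set list"
  assumes lpt: "lpt p pool l NB" and finite_pool: "finite pool" and nonneg: "\<forall>j\<in>pool. 0 \<le> p j"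
begin

lemma lpt_length: "length NB = l"
  using lpt lpt_place_length by (auto simp: lpt_def)

lemma lpt_bag_count: "bag_count j NB = of_bool (j \<in> pool)"
proof -
  obtain js where "distinct js" "set js = pool" "lpt_place p (replicate l {}) js NB"
    using lpt unfolding lpt_def by blast
  then show ?thesis
    using lpt_place_bag_count[of p "replicate l {}" js NB] by (simp add: bag_count_eq_0_iff)
qed

lemma lpt_subset:
  assumes "B \<in> set NB"
  shows "B \<subseteq> pool"
proof -
  obtain js where js: "set js = pool" and place: "lpt_place p (replicate l {}) js NB"
    using lpt unfolding lpt_def by blast
  obtain k where k: "k < length NB" "B = NB ! k"
    using assms by (auto simp: in_set_conv_nth)
  then have "k < length (replicate l {})"
    using lpt_place_length[OF place] by simp
  then show ?thesis
    using lpt_place_subset[OF place] k js by simp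
qed

lemma lpt_finite: "B \<in> set NB \<Longrightarrow> finite B"
  using lpt_subset finite_pool finite_subset by blast

lemma lpt_last_job:
  assumes "A \<in> set NB" "A \<noteq> {}"
  shows "\<exists>j\<in>A. (\<forall>i\<in>A. p j \<le> p i) \<and> (\<forall>B\<in>set NB. psum p A - p j \<le> psum p B)"
proof -
  obtain js where js: "distinct js" "set js = pool" "sorted_wrt (\<lambda>a b. p a \<ge> p b) js"
    "lpt_place p (replicate l {}) js NB"
    using lpt unfolding lpt_def by blast
  obtain k where k: "k < l" "A = NB ! k"
    using assms(1) lpt_length by (auto simp: in_set_conv_nth)
  show ?thesis
    using lpt_place_last_job[OF js(4,3,1) _ _ _ _, of k] js(2) nonneg k assms(2) lpt_length
    by (simp add: all_set_conv_all_nth)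
qed

lemma lpt_bags_balanced: "bags_balanced p 2 NB"
  unfolding bags_balanced_def
proof (intro ballI impI)
  fix A B assume A: "A \<in> set NB" and B: "B \<in> set NB" and card: "2 \<le> card A"
  obtain j where j: "j \<in> A" "\<forall>i\<in>A. p j \<le> p i" "psum p A - p j \<le> psum p B"
    using lpt_last_job A B card by force
  have "A \<noteq> {j}"
    using card by auto
  then obtain i where i: "i \<in> A" "i \<noteq> j"
    using j(1) by blast
  have "p i + p j \<le> psum p A"
    using psum_pair_le[OF lpt_finite[OF A] i(1) j(1) i(2)] lpt_subset[OF A] nonneg by blast
  then show "psum p A \<le> 2 * psum p B"
    using j(2,3) i(1) by fastforce
qed

lemma lpt_capped_psum_le:
  assumes B: "B \<in> set NB" and X: "X \<in> set NB" and cap: "2 * psum p X \<le> \<kappa>"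
  shows "psum (\<lambda>j. min (p j) \<kappa>) B \<le> \<kappa>"
proof (cases "B = {}")
  case True
  have "0 \<le> psum p X"
    using lpt_subset[OF X] nonneg by (intro psum_nonneg) blast
  then show ?thesis
    using True cap by (simp add: psum_def)
next
  case False
  obtain j where j: "j \<in> B" "\<forall>i\<in>B. p j \<le> p i" "psum p B - p j \<le> psum p X"
    using lpt_last_job[OF B False] X by blast
  show ?thesis
  proof (cases "2 * p j \<le> \<kappa>")
    case True
    have "psum (\<lambda>j. min (p j) \<kappa>) B \<le> psum p B"
      by (rule psum_min_le)
    then show ?thesis
      using j(3) True cap by linarith
  next
    case False
    have "B = {j}"
    proof (rule ccontr)
      assume "B \<noteq> {j}"
      then obtain i where i: "i \<in> B" "i \<noteq> j"
        using j(1) by blast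
      have "p i + p j \<le> psum p B"
        using psum_pair_le[OF lpt_finite[OF B] i(1) j(1) i(2)] lpt_subset[OF B] nonneg by blast
      then show False
        using j(2)[rule_format, OF i(1)] j(3) False cap by linarith
    qed
    then show ?thesis
      by (simp add: psum_def)
  qed
qed

lemma lpt_capped_sum_le:
  fixes \<kappa> :: real
  assumes X: "X \<in> set NB" and cap: "2 * psum p X \<le> \<kappa>"
  shows "sum_list (map (psum (\<lambda>j. min (p j) \<kappa>)) NB) \<le> psum p X + (l - 1) * \<kappa>"
proof -
  let ?w = "\<lambda>j. min (p j) \<kappa>"
  have "psum ?w B \<le> \<kappa>" if "B \<in> set (remove1 X NB)" for B
    using lpt_capped_psum_le[OF subsetD[OF set_remove1_subset that] X cap] .
  then have "sum_list (map (psum ?w) (remove1 X NB)) \<le> length (remove1 X NB) * \<kappa>"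
    by (intro sum_list_le_length_mult) blast
  moreover have "psum ?w X \<le> psum p X"
    by (rule psum_min_le)
  moreover have "sum_list (map (psum ?w) NB) = psum ?w X + sum_list (map (psum ?w) (remove1 X NB))"
    using X by (simp add: sum_list_map_remove1)
  ultimately show ?thesis
    using X lpt_length by (simp add: length_remove1)
qed

lemma lpt_sum_list_split:
  assumes split: "\<And>j. of_bool (j \<in> G0) + bag_count j gs = of_bool (j \<in> pool)"
  shows "sum_list (map (psum w) NB) = psum w G0 + sum_list (map (psum w) gs)"
proof -
  have G0_sub: "G0 \<subseteq> pool" and gs_sub: "\<forall>G\<in>set gs. G \<subseteq> pool"
    using split by (metis add_eq_0_iff_both_eq_0 bag_count_eq_0_iff of_bool_eq_0_iff subsetI)+
  have "sum_list (map (psum w) NB) = (\<Sum>j\<in>pool. w j * bag_count j NB)"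
    using sum_list_psum_conv_sum[OF finite_pool] lpt_subset by blast
  also have "\<dots> = (\<Sum>j\<in>pool. w j * of_bool (j \<in> G0) + w j * bag_count j gs)"
  proof (rule sum.cong)
    fix j
    have "bag_count j NB = of_bool (j \<in> G0) + bag_count j gs"
      using split lpt_bag_count by simp
    then show "w j * bag_count j NB = w j * of_bool (j \<in> G0) + w j * bag_count j gs"
      by (simp add: distrib_left)
  qed simp
  also have "\<dots> = psum w G0 + sum_list (map (psum w) gs)"
    by (simp add: sum.distrib psum_conv_sum[OF finite_pool G0_sub] sum_list_psum_conv_sum[OF finite_pool gs_sub])
  finally show ?thesis .
qed

text \<open>If the least LPT load \<open>x\<close> were below \<open>\<mu>\<close>, cap processing times at \<open>\<kappa> = x + \<mu>\<close>: every LPT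
  bag but a least loaded one has capped load at most \<open>\<kappa>\<close>, whereas the capped loads of the
  groups the pool was made of are at least \<open>\<mu>\<close> and \<open>\<kappa>\<close>; the two counts of the capped total
  contradict each other.\<close>

lemma lpt_psum_ge_if_split:
  assumes l: "l = length gs + 1"
    and split: "\<And>j. of_bool (j \<in> G0) + bag_count j gs = of_bool (j \<in> pool)"
    and G0: "psum p G0 = \<mu>" and gs: "\<forall>G\<in>set gs. 2 * \<mu> \<le> psum p G"
    and B: "B \<in> set NB"
  shows "\<mu> \<le> psum p B"
proof (rule ccontr)
  assume "\<not> \<mu> \<le> psum p B"
  define X where "X = arg_min_on (psum p) (set NB)"
  have nonempty: "set NB \<noteq> {}"
    using B by auto
  have X: "X \<in> set NB" and X_min: "\<forall>B\<in>set NB. psum p X \<le> psum p B"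
    unfolding X_def using arg_min_if_finite(1)[OF finite_set nonempty] arg_min_least[OF finite_set nonempty]
    by blast+
  define x where "x = psum p X"
  define \<kappa> where "\<kappa> = x + \<mu>"
  define w where "w = (\<lambda>j. min (p j) \<kappa>)"
  have "x \<le> psum p B"
    using X_min B unfolding x_def by blast
  then have x_less: "x < \<mu>"
    using \<open>\<not> \<mu> \<le> psum p B\<close> by linarith
  have x_nonneg: "0 \<le> x"
    using lpt_subset[OF X] nonneg unfolding x_def by (intro psum_nonneg) blast
  have G0_sub: "G0 \<subseteq> pool" and gs_sub: "\<forall>G\<in>set gs. G \<subseteq> pool"
    using split by (metis add_eq_0_iff_both_eq_0 bag_count_eq_0_iff of_bool_eq_0_iff subsetI)+
  have "finite G \<and> (\<forall>j\<in>G. 0 \<le> p j) \<and> \<kappa> \<le> psum p G" if "G \<in> set gs" for G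
  proof -
    have "G \<subseteq> pool" "2 * \<mu> \<le> psum p G"
      using gs_sub gs that by blast+
    moreover have "finite G"
      using \<open>G \<subseteq> pool\<close> finite_pool by (rule finite_subset)
    ultimately show ?thesis
      using nonneg x_less unfolding \<kappa>_def by auto
  qed
  moreover have "finite G0" "\<forall>j\<in>G0. 0 \<le> p j" "\<mu> \<le> psum p G0" "0 \<le> \<mu>" "\<mu> \<le> \<kappa>"
    using G0_sub finite_pool finite_subset nonneg G0 x_nonneg x_less unfolding \<kappa>_def by auto
  ultimately have "\<mu> + length gs * \<kappa> \<le> psum w G0 + sum_list (map (psum w) gs)"
    unfolding w_def by (intro capped_psum_lower) blast+
  moreover have "sum_list (map (psum w) NB) \<le> x + (l - 1) * \<kappa>"
    using lpt_capped_sum_le[OF X] x_less unfolding w_def x_def \<kappa>_def by simp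
  moreover have "real (l - 1) = length gs"
    using l by simp
  ultimately show False
    using lpt_sum_list_split[OF split] x_less by (simp add: algebra_simps)
qed

end

section \<open>Scheduling balanced bags\<close>

context
  fixes m N :: nat and c :: real and b y :: "nat \<Rightarrow> real" and single :: "nat \<Rightarrow> bool"
  assumes m: "1 \<le> m" "m \<le> N + 1" and c: "2 \<le> c"
    and b_nonneg: "\<forall>t<N. 0 \<le> b t" and y_nonneg: "\<forall>i<m. 0 \<le> y i"
    and multi: "\<forall>t<N. \<forall>u<N. \<not> single t \<longrightarrow> b t \<le> c * b u"
    and total: "(\<Sum>t<N. b t) \<le> (\<Sum>i<m. y i)"
    and singles: "\<And>A \<beta>. A \<subseteq> {..<N} \<Longrightarrow> \<forall>t\<in>A. single t \<and> \<beta> \<le> b t \<Longrightarrow>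
                   (\<Sum>t\<in>A. b t) \<le> (\<Sum>i\<in>{i. i < m \<and> \<beta> \<le> y i}. y i)"
begin

lemma sum_lower_bound_if_small:
  assumes A: "A \<subseteq> {..<N}" and ts: "ts < N" "ts \<notin> A" and small: "\<forall>v<N. b ts \<le> c * b v"
  shows "c * b ts + c * (\<Sum>t\<in>A. b t) + (real N - card A - 1) * b ts \<le> c * (\<Sum>t<N. b t)"
proof -
  define R where "R = {..<N} - insert ts A"
  have finite_A: "finite A"
    using A finite_subset by blast
  have cover: "{..<N} = insert ts (A \<union> R)" and "A \<inter> R = {}" "ts \<notin> A \<union> R" "finite R"
    using A ts unfolding R_def by auto
  then have "(\<Sum>t\<in>insert ts (A \<union> R). b t) = b ts + (\<Sum>t\<in>A. b t) + (\<Sum>t\<in>R. b t)"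
    using finite_A by (simp add: sum.union_disjoint)
  then have split: "(\<Sum>t<N. b t) = b ts + (\<Sum>t\<in>A. b t) + (\<Sum>t\<in>R. b t)"
    by (simp flip: cover)
  have "card (insert ts A) = card A + 1" "card (insert ts A) \<le> N"
    using finite_A ts A card_mono[of "{..<N}" "insert ts A"] by auto
  then have "real (card R) = real N - card A - 1"
    using finite_A A ts unfolding R_def by (simp add: card_Diff_subset of_nat_diff)
  moreover have "(\<Sum>t\<in>R. b ts) \<le> (\<Sum>t\<in>R. c * b t)"
    using small unfolding R_def by (intro sum_mono) simp
  ultimately have "(real N - card A - 1) * b ts \<le> c * (\<Sum>t\<in>R. b t)"
    by (simp add: sum_distrib_left)
  then show ?thesis
    using split by (simp add: distrib_left)
qed

lemma greedy_step_small:
  assumes A: "A \<subseteq> {..<N}" and ts: "ts < N" "ts \<notin> A" and below: "\<forall>t\<in>A. b ts \<le> b t"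
    and g: "\<forall>t\<in>A. g t < m" and small: "\<forall>v<N. b ts \<le> c * b v"
  shows "\<exists>i<m. (\<Sum>t\<in>{t\<in>A. g t = i}. b t) + b ts \<le> c * y i"
proof (rule ccontr)
  assume "\<not> ?thesis"
  then have full: "\<forall>i<m. c * y i < (\<Sum>t\<in>{t\<in>A. g t = i}. b t) + b ts"
    by force
  define Pre where "Pre = (\<Sum>t\<in>A. b t)"
  have finite_A: "finite A"
    using A finite_subset by blast
  have bs_nonneg: "0 \<le> b ts" and Pre_nonneg: "0 \<le> Pre"
    using b_nonneg ts A unfolding Pre_def by (auto intro: sum_nonneg)
  have "(\<Sum>t\<in>A. b ts) \<le> Pre"
    unfolding Pre_def using below by (intro sum_mono) blast
  then have Pre_ge: "card A * b ts \<le> Pre"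
    by simp
  have loads: "(\<Sum>i<m. \<Sum>t\<in>{t\<in>A. g t = i}. b t) = Pre"
    unfolding Pre_def using sum.group[OF finite_A finite_lessThan, where g=g and h=b] g by auto
  have "(\<Sum>i<m. c * y i) < (\<Sum>i<m. (\<Sum>t\<in>{t\<in>A. g t = i}. b t) + b ts)"
    using full m by (intro sum_strict_mono) (auto simp: lessThan_empty_iff)
  then have upper: "c * (\<Sum>i<m. y i) < Pre + m * b ts"
    by (simp add: sum_distrib_left[symmetric] sum.distrib loads)
  have "c * (\<Sum>t<N. b t) \<le> c * (\<Sum>i<m. y i)"
    using mult_left_mono[OF total] c by simp
  then have lower: "c * b ts + c * Pre + (real N - card A - 1) * b ts \<le> c * (\<Sum>i<m. y i)"
    using sum_lower_bound_if_small[OF A ts small] unfolding Pre_def by linarith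
  have "2 * b ts \<le> c * b ts" "2 * Pre \<le> c * Pre" "m * b ts \<le> N * b ts + b ts"
    using c bs_nonneg Pre_nonneg m mult_right_mono[of "real m" "real N + 1" "b ts"]
    by (auto intro: mult_right_mono simp: distrib_right)
  then show False
    using upper lower Pre_ge by (simp add: algebra_simps)
qed

lemma greedy_step_large:
  assumes g: "\<forall>t\<in>A. g t < m" and fits: "\<forall>i<m. (\<Sum>t\<in>{t\<in>A. g t = i}. b t) \<le> c * y i"
    and finite_A: "finite A" and ts: "ts \<notin> A" and b_ts: "0 \<le> b ts" and A_nonneg: "\<forall>t\<in>A. 0 \<le> b t"
    and large: "(\<Sum>t\<in>insert ts A. b t) \<le> (\<Sum>i\<in>{i. i < m \<and> b ts \<le> y i}. y i)"
  shows "\<exists>i<m. (\<Sum>t\<in>{t\<in>A. g t = i}. b t) + b ts \<le> c * y i"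
proof (rule ccontr)
  assume "\<not> ?thesis"
  then have full: "\<forall>i<m. c * y i < (\<Sum>t\<in>{t\<in>A. g t = i}. b t) + b ts"
    by force
  define G where "G = {i. i < m \<and> b ts \<le> y i}"
  define Ld where "Ld i = (\<Sum>t\<in>{t\<in>A. g t = i}. b t)" for i
  have "(\<Sum>i<m. Ld i) = (\<Sum>t\<in>A. b t)"
    unfolding Ld_def using sum.group[OF finite_A finite_lessThan, where g=g and h=b] g by auto
  moreover have "(\<Sum>i\<in>G. Ld i) \<le> (\<Sum>i<m. Ld i)"
    unfolding Ld_def G_def using A_nonneg by (intro sum_mono2 sum_nonneg) auto
  ultimately have G_loads: "(\<Sum>i\<in>G. Ld i) \<le> (\<Sum>t\<in>A. b t)"
    by simp
  have G_room: "(\<Sum>t\<in>A. b t) + b ts \<le> (\<Sum>i\<in>G. y i)"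
    using large finite_A ts unfolding G_def by simp
  show False
  proof (cases "G = {}")
    case True
    then have "b ts = 0"
      using G_room b_ts sum_nonneg[of A b] A_nonneg by simp
    moreover have "c * y 0 < Ld 0 + b ts" "Ld 0 \<le> c * y 0"
      using full fits m(1) unfolding Ld_def by auto
    ultimately show False
      by linarith
  next
    case False
    have "(\<Sum>i\<in>G. c * y i) < (\<Sum>i\<in>G. Ld i + b ts)"
      using full False unfolding G_def Ld_def by (intro sum_strict_mono) auto
    moreover have "(\<Sum>i\<in>G. b ts) \<le> (\<Sum>i\<in>G. y i)"
      unfolding G_def by (intro sum_mono) simp
    moreover have "2 * (\<Sum>i\<in>G. y i) \<le> c * (\<Sum>i\<in>G. y i)"
      using c y_nonneg unfolding G_def by (intro mult_right_mono sum_nonneg) auto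
    ultimately show False
      using G_loads G_room b_ts by (simp add: sum.distrib sum_distrib_left[symmetric])
  qed
qed

lemma greedy_step:
  assumes A: "A \<subseteq> {..<N}" and ts: "ts < N" "ts \<notin> A" and below: "\<forall>t\<in>A. b ts \<le> b t"
    and g: "\<forall>t\<in>A. g t < m" and fits: "\<forall>i<m. (\<Sum>t\<in>{t\<in>A. g t = i}. b t) \<le> c * y i"
  shows "\<exists>i<m. (\<Sum>t\<in>{t\<in>A. g t = i}. b t) + b ts \<le> c * y i"
proof (cases "\<forall>u\<in>insert ts A. single u")
  case True
  have "(\<Sum>t\<in>insert ts A. b t) \<le> (\<Sum>i\<in>{i. i < m \<and> b ts \<le> y i}. y i)"
    using singles[of "insert ts A" "b ts"] True A ts below by auto
  moreover have "finite A" "0 \<le> b ts" "\<forall>t\<in>A. 0 \<le> b t"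
    using A ts b_nonneg finite_subset by auto
  ultimately show ?thesis
    using greedy_step_large g fits ts(2) by blast
next
  case False
  then obtain u where u: "u \<in> insert ts A" "\<not> single u"
    by blast
  have "\<forall>v<N. b ts \<le> c * b v"
    using multi u below A ts by (metis insert_iff lessThan_iff order.trans order_refl subsetD)
  then show ?thesis
    using greedy_step_small A ts below g by blast
qed

lemma greedy_assignment_sorted:
  assumes "distinct ts" "set ts \<subseteq> {..<N}" "sorted_wrt (\<lambda>u v. b v \<le> b u) ts"
  shows "\<exists>g. (\<forall>t\<in>set ts. g t < m) \<and> (\<forall>i<m. (\<Sum>t\<in>{t\<in>set ts. g t = i}. b t) \<le> c * y i)"
  using assms
proof (induction ts rule: rev_induct)
  case Nil
  show ?case
    using c y_nonneg by (intro exI[of _ "\<lambda>_. 0"]) auto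
next
  case (snoc t ts)
  have "distinct ts" "set ts \<subseteq> {..<N}" "sorted_wrt (\<lambda>u v. b v \<le> b u) ts"
    using snoc.prems by (simp_all add: sorted_wrt_append)
  then obtain g where g: "\<forall>u\<in>set ts. g u < m" "\<forall>i<m. (\<Sum>u\<in>{u\<in>set ts. g u = i}. b u) \<le> c * y i"
    using snoc.IH by blast
  have below: "\<forall>u\<in>set ts. b t \<le> b u"
    using snoc.prems(3) by (simp add: sorted_wrt_append)
  have ts: "set ts \<subseteq> {..<N}" "t < N" "t \<notin> set ts"
    using snoc.prems(1,2) by auto
  obtain i where i: "i < m" "(\<Sum>u\<in>{u\<in>set ts. g u = i}. b u) + b t \<le> c * y i"
    using greedy_step[OF ts below g] by blast
  show ?case
  proof (intro exI[of _ "g(t := i)"] conjI ballI allI impI)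
    fix i' assume "i' < m"
    show "(\<Sum>u\<in>{u\<in>set (ts @ [t]). (g(t := i)) u = i'}. b u) \<le> c * y i'"
    proof (cases "i' = i")
      case True
      then have "{u\<in>set (ts @ [t]). (g(t := i)) u = i'} = insert t {u\<in>set ts. g u = i}"
        using ts(3) by auto
      then show ?thesis
        using True i(2) ts(3) by (simp add: add.commute)
    next
      case False
      then have "{u\<in>set (ts @ [t]). (g(t := i)) u = i'} = {u\<in>set ts. g u = i'}"
        using ts(3) by auto
      then show ?thesis
        using g(2) \<open>i' < m\<close> by simp
    qed
  qed (use g(1) i(1) in auto)
qed

lemma greedy_assignment:
  "\<exists>g. (\<forall>t<N. g t < m) \<and> (\<forall>i<m. (\<Sum>t\<in>{t. t < N \<and> g t = i}. b t) \<le> c * y i)"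
proof -
  define ts where "ts = sort_key (\<lambda>t. - b t) [0..<N]"
  have "distinct ts" "set ts = {..<N}" "sorted_wrt (\<lambda>u v. b v \<le> b u) ts"
    unfolding ts_def using sorted_sort_key[of "\<lambda>t. - b t" "[0..<N]"] by (auto simp: sorted_map)
  then show ?thesis
    using greedy_assignment_sorted[of ts] by auto
qed

end

lemma opt_attained:
  assumes m: "1 \<le> m" and s: "\<forall>i<m. 0 < s i" and p: "\<forall>j<n. 0 \<le> p j"
  obtains f T where "\<forall>j<n. f j < m" "0 \<le> T" "opt p s n m = ereal T"
    "\<forall>i<m. (\<Sum>j | j < n \<and> f j = i. p j) \<le> s i * T"
proof -
  define F where "F f = Max ((\<lambda>i. ratio (\<Sum>j | j < n \<and> f j = i. p j) (s i)) ` {0..<m})" for f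
  have "{0..<n} \<rightarrow>\<^sub>E {0..<m} \<noteq> {}"
    using m by (auto simp: PiE_eq_empty_iff)
  then have "Min (F ` ({0..<n} \<rightarrow>\<^sub>E {0..<m})) \<in> F ` ({0..<n} \<rightarrow>\<^sub>E {0..<m})"
    by (intro Min_in finite_imageI finite_PiE) auto
  then obtain f where f: "f \<in> {0..<n} \<rightarrow>\<^sub>E {0..<m}" "opt p s n m = F f"
    unfolding opt_def F_def by auto
  define ld where "ld i = (\<Sum>j | j < n \<and> f j = i. p j)" for i
  define T where "T = Max ((\<lambda>i. ld i / s i) ` {0..<m})"
  have "F f = Max (ereal ` (\<lambda>i. ld i / s i) ` {0..<m})"
    unfolding F_def ld_def[symmetric] image_image using s by (intro arg_cong[where f=Max] image_cong) (auto simp: ratio_def)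
  also have "\<dots> = ereal T"
    unfolding T_def using m by (intro mono_Max_commute[symmetric]) (auto simp: mono_def)
  finally have opt: "opt p s n m = ereal T"
    using f(2) by simp
  have ratio_le: "ld i / s i \<le> T" if "i < m" for i
    unfolding T_def using that by (intro Max_ge) auto
  have "0 \<le> ld 0 / s 0"
    unfolding ld_def using p s m by (intro divide_nonneg_pos sum_nonneg) auto
  then have "0 \<le> T"
    using ratio_le[of 0] m by linarith
  moreover have "ld i \<le> s i * T" if "i < m" for i
    using ratio_le[OF that] s that by (simp add: divide_le_eq mult.commute)
  moreover have "\<forall>j<n. f j < m"
    using f(1) by auto
  ultimately show ?thesis
    using that opt unfolding ld_def by blast
qed

lemma sum_preimage_group:
  fixes n :: nat
  shows "finite G \<Longrightarrow> (\<Sum>j | j < n \<and> f j \<in> G. p j) = (\<Sum>i\<in>G. \<Sum>j | j < n \<and> f j = i. p j)"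
proof -
  assume "finite G"
  moreover have "finite {j. j < n \<and> f j \<in> G}"
    by (rule finite_subset[of _ "{..<n}"]) auto
  ultimately have "(\<Sum>i\<in>G. \<Sum>j\<in>{j \<in> {j. j < n \<and> f j \<in> G}. f j = i}. p j) = (\<Sum>j | j < n \<and> f j \<in> G. p j)"
    by (intro sum.group) auto
  moreover have "{j \<in> {j. j < n \<and> f j \<in> G}. f j = i} = {j. j < n \<and> f j = i}" if "i \<in> G" for i
    using that by auto
  ultimately show ?thesis
    by simp
qed

text \<open>A single-job bag of size at least \<open>\<beta>\<close> has its job on a machine of load, hence capacity,
  at least \<open>\<beta>\<close> in the schedule \<open>f\<close>.\<close>

lemma singleton_bags_fit:
  assumes partition: "bag_partition n m bs" and p: "\<forall>j<n. 0 \<le> p j"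
    and f: "\<forall>j<n. f j < m" and loads: "\<forall>i<m. (\<Sum>j | j < n \<and> f j = i. p j) \<le> y i"
    and A: "A \<subseteq> {..<m}" "\<forall>t\<in>A. card (bs ! t) < 2 \<and> \<beta> \<le> psum p (bs ! t)"
  shows "(\<Sum>t\<in>A. psum p (bs ! t)) \<le> (\<Sum>i\<in>{i. i < m \<and> \<beta> \<le> y i}. y i)"
proof -
  define G where "G = {i. i < m \<and> \<beta> \<le> y i}"
  have "(\<Sum>t\<in>A. psum p (bs ! t)) = psum p (\<Union>t\<in>A. bs ! t)"
    by (rule bag_partition_psum_UN[OF partition A(1)])
  also have "\<dots> \<le> (\<Sum>j | j < n \<and> f j \<in> G. p j)"
    unfolding psum_def
  proof (rule sum_mono2)
    show "(\<Union>t\<in>A. bs ! t) \<subseteq> {j. j < n \<and> f j \<in> G}"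
    proof
      fix j assume "j \<in> (\<Union>t\<in>A. bs ! t)"
      then obtain t where t: "t \<in> A" "j \<in> bs ! t"
        by blast
      have "bs ! t \<subseteq> {..<n}"
        using bag_partition_nth_subset[OF partition] A(1) t(1) by blast
      then have "j < n" "finite (bs ! t)"
        using t(2) finite_subset by auto
      moreover have "card (bs ! t) \<le> Suc 0"
      proof -
        have "card (bs ! t) < 2"
          using A(2) t(1) by blast
        then show ?thesis
          by linarith
      qed
      ultimately have "bs ! t = {j}"
        using t(2) by (auto simp: card_le_Suc0_iff_eq)
      then have "\<beta> \<le> p j"
        using A(2) t(1) by (auto simp: psum_def)
      also have "p j \<le> (\<Sum>j' | j' < n \<and> f j' = f j. p j')"
        using \<open>j < n\<close> p by (intro member_le_sum) auto
      also have "\<dots> \<le> y (f j)"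
        using loads f \<open>j < n\<close> by auto
      finally show "j \<in> {j. j < n \<and> f j \<in> G}"
        using \<open>j < n\<close> f unfolding G_def by auto
    qed
  qed (use p in auto)
  also have "\<dots> = (\<Sum>i\<in>G. \<Sum>j | j < n \<and> f j = i. p j)"
    by (rule sum_preimage_group) (simp add: G_def)
  also have "\<dots> \<le> (\<Sum>i\<in>G. y i)"
    using loads unfolding G_def by (intro sum_mono) auto
  finally show ?thesis
    unfolding G_def .
qed

lemma opt_bags_le_if_assignment:
  assumes m: "1 \<le> m" and s: "\<forall>i<m. 0 < s i" and g: "\<forall>t<length bs. g t < m"
    and fits: "\<forall>i<m. (\<Sum>t | t < length bs \<and> g t = i. psum p (bs ! t)) \<le> s i * T"
  shows "opt_bags p s m bs \<le> ereal T"
proof -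
  define g' where "g' = restrict g {0..<length bs}"
  have "g' \<in> {0..<length bs} \<rightarrow>\<^sub>E {0..<m}"
    using g unfolding g'_def by auto
  then have "opt_bags p s m bs \<le> Max ((\<lambda>i. ratio (\<Sum>t | t < length bs \<and> g' t = i. psum p (bs ! t)) (s i)) ` {0..<m})"
    unfolding opt_bags_def by (intro Min_le finite_imageI finite_PiE) auto
  also have "\<dots> \<le> ereal T"
  proof (rule Max.boundedI)
    fix r assume "r \<in> (\<lambda>i. ratio (\<Sum>t | t < length bs \<and> g' t = i. psum p (bs ! t)) (s i)) ` {0..<m}"
    then obtain i where i: "i < m" and r: "r = ratio (\<Sum>t | t < length bs \<and> g' t = i. psum p (bs ! t)) (s i)"
      by auto
    have "(\<Sum>t | t < length bs \<and> g' t = i. psum p (bs ! t)) = (\<Sum>t | t < length bs \<and> g t = i. psum p (bs ! t))"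
      unfolding g'_def by (intro sum.cong) auto
    moreover have "0 < s i"
      using s i by blast
    ultimately show "r \<le> ereal T"
      using r fits i by (simp add: ratio_def divide_le_eq mult.commute)
  qed (use m in auto)
  finally show ?thesis .
qed

lemma opt_bags_le_if_balanced:
  assumes m: "1 \<le> m" and s: "\<forall>i<m. 0 < s i" and p: "\<forall>j<n. 0 \<le> p j"
    and partition: "bag_partition n m bs" and c: "2 \<le> c" and balanced: "bags_balanced p c bs"
  shows "opt_bags p s m bs \<le> ereal c * opt p s n m"
proof -
  obtain f T where f: "\<forall>j<n. f j < m" and T: "0 \<le> T" "opt p s n m = ereal T"
    and loads: "\<forall>i<m. (\<Sum>j | j < n \<and> f j = i. p j) \<le> s i * T"
    using opt_attained[OF m s p] by blast
  have len: "length bs = m"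
    using partition by (simp add: bag_partition_def)
  have bags_nonneg: "\<forall>t<m. 0 \<le> psum p (bs ! t)"
    using bag_partition_psum_nonneg[OF partition p] len nth_mem by blast
  have capacities_nonneg: "\<forall>i<m. 0 \<le> s i * T"
    using s T(1) by (simp add: less_imp_le)
  have "f ` {..<n} \<subseteq> {..<m}"
    using f by auto
  then have "(\<Sum>t<m. psum p (bs ! t)) = (\<Sum>i<m. \<Sum>j | j < n \<and> f j = i. p j)"
    using sum_psum_bag_partition[OF partition] sum.group[of "{..<n}" "{..<m}" f p] by simp
  also have "\<dots> \<le> (\<Sum>i<m. s i * T)"
    using loads by (intro sum_mono) auto
  finally have total: "(\<Sum>t<m. psum p (bs ! t)) \<le> (\<Sum>i<m. s i * T)" .
  have multi: "\<forall>t<m. \<forall>u<m. \<not> card (bs ! t) < 2 \<longrightarrow> psum p (bs ! t) \<le> c * psum p (bs ! u)"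
    using balanced len unfolding bags_balanced_def by (simp add: not_less)
  have "\<exists>g. (\<forall>t<m. g t < m) \<and> (\<forall>i<m. (\<Sum>t | t < m \<and> g t = i. psum p (bs ! t)) \<le> c * (s i * T))"
    by (rule greedy_assignment[OF m(1) _ c bags_nonneg capacities_nonneg multi total
          singleton_bags_fit[where y="\<lambda>i. s i * T", OF partition p f loads]]) simp
  then obtain g where "\<forall>t<length bs. g t < m"
    "\<forall>i<m. (\<Sum>t | t < length bs \<and> g t = i. psum p (bs ! t)) \<le> s i * (c * T)"
    unfolding len by (auto simp: mult.left_commute)
  then have "opt_bags p s m bs \<le> ereal (c * T)"
    by (rule opt_bags_le_if_assignment[OF m s])
  then show ?thesis
    using T by simp
qed

section \<open>The rebalancing loop\<close>

lemma bag_image_bagpos: "bag M ` bagpos m M = set (all_bags m M)"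
  by (force simp: set_all_bags bagpos_def bag_def in_set_conv_nth)

lemma loop_cond_iff:
  "loop_cond p m \<rho> M \<longleftrightarrow>
     {B \<in> set (all_bags m M). 2 \<le> card B} \<noteq> {} \<and>
     \<rho> * Min (psum p ` set (all_bags m M)) < Max (psum p ` {B \<in> set (all_bags m M). 2 \<le> card B})"
proof -
  have "(\<lambda>q. psum p (bag M q)) ` {q \<in> bagpos m M. 2 \<le> card (bag M q)}
      = psum p ` {B \<in> set (all_bags m M). 2 \<le> card B}"
    unfolding bag_image_bagpos[symmetric] by auto
  moreover have "(\<lambda>q. psum p (bag M q)) ` bagpos m M = psum p ` set (all_bags m M)"
    unfolding bag_image_bagpos[symmetric] by auto
  ultimately show ?thesis
    unfolding loop_cond_def Let_def by (auto simp flip: bag_image_bagpos)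
qed

lemma nth_in_all_bags: "k < m \<Longrightarrow> t < length (M k) \<Longrightarrow> M k ! t \<in> set (all_bags m M)"
  unfolding set_all_bags using nth_mem by blast

lemma lpt_rebalanceE:
  assumes "lpt_rebalance p m M M'"
  obtains k0 t0 k1 t1 NB where "k0 < m" "t0 < length (M k0)" "k1 < m" "t1 < length (M k1)"
    "\<forall>B\<in>set (all_bags m M). psum p (M k0 ! t0) \<le> psum p B"
    "2 \<le> card (M k1 ! t1)" "\<forall>B\<in>set (all_bags m M). 2 \<le> card B \<longrightarrow> psum p B \<le> psum p (M k1 ! t1)"
    "lpt p (M k0 ! t0 \<union> \<Union>(set ((M(k0 := remove_nth t0 (M k0))) k1)))
       (length ((M(k0 := remove_nth t0 (M k0))) k1) + 1) NB"
    "M' = (M(k0 := remove_nth t0 (M k0)))(k1 := NB)"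
proof -
  obtain k0 t0 k1 t1 NB where pos: "(k0, t0) \<in> bagpos m M" "(k1, t1) \<in> bagpos m M"
    and "\<forall>q\<in>bagpos m M. psum p (bag M (k0, t0)) \<le> psum p (bag M q)"
    and card: "2 \<le> card (bag M (k1, t1))"
    and "\<forall>q\<in>bagpos m M. 2 \<le> card (bag M q) \<longrightarrow> psum p (bag M q) \<le> psum p (bag M (k1, t1))"
    and rest: "lpt p (bag M (k0, t0) \<union> \<Union>(set ((M(k0 := remove_nth t0 (M k0))) k1)))
       (length ((M(k0 := remove_nth t0 (M k0))) k1) + 1) NB"
      "M' = (M(k0 := remove_nth t0 (M k0)))(k1 := NB)"
    using assms unfolding lpt_rebalance_def Let_def by blast
  then have "\<forall>B\<in>bag M ` bagpos m M. psum p (bag M (k0, t0)) \<le> psum p B"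
    "\<forall>B\<in>bag M ` bagpos m M. 2 \<le> card B \<longrightarrow> psum p B \<le> psum p (bag M (k1, t1))"
    by blast+
  then show ?thesis
    using pos card rest unfolding bag_image_bagpos
    by (intro that[of k0 t0 k1 t1 NB]) (simp_all add: bagpos_def bag_def)
qed

lemma loop_cond_gap:
  assumes "loop_cond p m \<rho> M"
    and "Bmin \<in> set (all_bags m M)" "\<forall>B\<in>set (all_bags m M). psum p Bmin \<le> psum p B"
    and "D \<in> set (all_bags m M)" "2 \<le> card D" "\<forall>B\<in>set (all_bags m M). 2 \<le> card B \<longrightarrow> psum p B \<le> psum p D"
  shows "\<rho> * psum p Bmin < psum p D"
proof -
  have "Min (psum p ` set (all_bags m M)) = psum p Bmin"
    using assms(2,3) by (intro Min_eqI) auto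
  moreover have "Max (psum p ` {B \<in> set (all_bags m M). 2 \<le> card B}) = psum p D"
    using assms(4-6) by (intro Max_eqI) auto
  ultimately show ?thesis
    using assms(1) by (simp add: loop_cond_iff)
qed

lemma not_loop_cond_balanced:
  assumes "\<not> loop_cond p m \<rho> M" "0 \<le> \<rho>"
  shows "bags_balanced p \<rho> (all_bags m M)"
  unfolding bags_balanced_def
proof (intro ballI impI)
  fix A B assume A: "A \<in> set (all_bags m M)" and B: "B \<in> set (all_bags m M)" and card: "2 \<le> card A"
  have "psum p A \<le> Max (psum p ` {B \<in> set (all_bags m M). 2 \<le> card B})"
    using A card by (intro Max_ge) auto
  also have "\<dots> \<le> \<rho> * Min (psum p ` set (all_bags m M))"
    using assms(1) A card by (auto simp: loop_cond_iff not_less)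
  also have "\<dots> \<le> \<rho> * psum p B"
    using B assms(2) by (intro mult_left_mono Min_le) auto
  finally show "psum p A \<le> \<rho> * psum p B" .
qed

definition load :: "(nat \<Rightarrow> real) \<Rightarrow> (nat \<Rightarrow> nat set list) \<Rightarrow> nat \<Rightarrow> real" where
  "load p M k = sum_list (map (psum p) (M k))"

lemma ratio_le_iff: "0 \<le> x \<Longrightarrow> 0 \<le> y \<Longrightarrow> 0 \<le> z \<Longrightarrow> ratio x y \<le> ereal z \<longleftrightarrow> x \<le> z * y"
  by (cases "y = 0") (auto simp: ratio_def divide_le_eq)

lemma pred_makespan_le_iff:
  assumes "1 \<le> m" "\<forall>k<m. 0 \<le> sh k" "\<forall>k<m. 0 \<le> load p M k" "0 \<le> z"
  shows "pred_makespan p m sh M \<le> ereal z \<longleftrightarrow> (\<forall>k<m. load p M k \<le> z * sh k)"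
proof -
  have "ratio (load p M k) (sh k) \<le> ereal z \<longleftrightarrow> load p M k \<le> z * sh k" if "k < m" for k
    using assms that by (intro ratio_le_iff) auto
  moreover have "pred_makespan p m sh M \<le> ereal z \<longleftrightarrow> (\<forall>k<m. ratio (load p M k) (sh k) \<le> ereal z)"
    unfolding pred_makespan_def load_def using assms(1) by (auto simp: Max_le_iff)
  ultimately show ?thesis
    by simp
qed

lemma load_nonneg:
  assumes "bag_partition n m (all_bags m M)" "\<forall>j<n. 0 \<le> p j"
  shows "\<forall>k<m. 0 \<le> load p M k"
proof (intro allI impI)
  fix k assume "k < m"
  then have "B \<subseteq> {..<n}" if "B \<in> set (M k)" for B
    using bag_partition_subset[OF assms(1)] that by (auto simp: set_all_bags)
  then show "0 \<le> load p M k"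
    unfolding load_def using assms(2) by (intro sum_list_nonneg) (auto intro!: psum_nonneg)
qed

text \<open>Used with \<open>a = 1 + \<alpha>\<close> and \<open>T = OPT\<^sub>C\<close>.\<close>

definition rebalance_invariant ::
  "(nat \<Rightarrow> real) \<Rightarrow> nat \<Rightarrow> (nat \<Rightarrow> real) \<Rightarrow> real \<Rightarrow> real \<Rightarrow> (nat \<Rightarrow> nat set list) \<Rightarrow> bool" where
  "rebalance_invariant p m sh a T M \<longleftrightarrow>
     (\<forall>k<m. load p M k \<le> a * T * sh k) \<and> (\<forall>k<m. bags_balanced p 2 (M k)) \<and>
     (\<exists>\<nu>. (\<forall>B\<in>set (all_bags m M). \<nu> \<le> psum p B) \<and>
          (\<forall>k<m. M k \<noteq> [] \<longrightarrow> load p M k \<le> T * sh k + (real (length (M k)) - 1) * \<nu>))"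

definition rebalanced ::
  "(nat \<Rightarrow> nat set list) \<Rightarrow> nat \<Rightarrow> nat \<Rightarrow> nat \<Rightarrow> nat set list \<Rightarrow> nat \<Rightarrow> nat set list" where
  "rebalanced M k0 t0 k1 NB = (M(k0 := remove_nth t0 (M k0)))(k1 := NB)"

lemma overload_ratio_le:
  fixes a l X \<mu> D :: real
  assumes a: "1 < a" and l: "1 \<le> l" and below: "(a - 1) * X < l * \<mu>" and D: "l * D \<le> 2 * a * X"
  shows "D \<le> 2 * a / (a - 1) * \<mu>"
proof -
  have "(a - 1) * (l * D) \<le> (a - 1) * (2 * a * X)"
    using D a by (intro mult_left_mono) auto
  moreover have "2 * a * ((a - 1) * X) < 2 * a * (l * \<mu>)"
    using below a by (intro mult_strict_left_mono) auto
  ultimately have "l * ((a - 1) * D) < l * (2 * a * \<mu>)"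
    by (simp add: algebra_simps)
  then have "(a - 1) * D < 2 * a * \<mu>"
    using l by (simp add: mult_less_cancel_left)
  then show ?thesis
    using a by (simp add: field_simps)
qed

locale rebalance_step =
  fixes p :: "nat \<Rightarrow> real" and n m :: nat and M :: "nat \<Rightarrow> nat set list"
    and k0 t0 k1 t1 :: nat and NB :: "nat set list"
  assumes nonneg: "\<forall>j<n. 0 \<le> p j"
    and partition: "bag_partition n m (all_bags m M)"
    and k0: "k0 < m" "t0 < length (M k0)" and k1: "k1 < m" "t1 < length (M k1)"
    and min_bag: "\<forall>B\<in>set (all_bags m M). psum p (M k0 ! t0) \<le> psum p B"
    and max_bag: "2 \<le> card (M k1 ! t1)"
      "\<forall>B\<in>set (all_bags m M). 2 \<le> card B \<longrightarrow> psum p B \<le> psum p (M k1 ! t1)"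
    and gap: "4 * psum p (M k0 ! t0) < psum p (M k1 ! t1)"
    and lpt: "lpt p (M k0 ! t0 \<union> \<Union>(set ((M(k0 := remove_nth t0 (M k0))) k1)))
                (length ((M(k0 := remove_nth t0 (M k0))) k1) + 1) NB"
begin

abbreviation "Bmin \<equiv> M k0 ! t0"
abbreviation "Bmax \<equiv> M k1 ! t1"
abbreviation "Mr \<equiv> M(k0 := remove_nth t0 (M k0))"
abbreviation "pool \<equiv> Bmin \<union> \<Union>(set (Mr k1))"
abbreviation "M' \<equiv> rebalanced M k0 t0 k1 NB"

lemma M'_apply: "M' k = (if k = k1 then NB else Mr k)"
  by (simp add: rebalanced_def)

lemma set_Mr_subset: "set (Mr k) \<subseteq> set (M k)"
  using set_remove_nth_subset[of t0 "M k0"] by auto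

lemma bags_subset: "k < m \<Longrightarrow> B \<in> set (M k) \<Longrightarrow> B \<subseteq> {..<n}"
  using bag_partition_subset[OF partition] by (auto simp: set_all_bags)

lemma psum_bag_nonneg: "k < m \<Longrightarrow> B \<in> set (M k) \<Longrightarrow> 0 \<le> psum p B"
  using bags_subset nonneg by (intro psum_nonneg) blast

lemma Bmin_in: "Bmin \<in> set (M k0)" and Bmax_in: "Bmax \<in> set (M k1)"
  using k0 k1 by simp_all

lemma Bmin_in_all_bags: "Bmin \<in> set (all_bags m M)"
  using k0 by (rule nth_in_all_bags)

lemma bag_count_Mr: "(\<Sum>k<m. bag_count j (Mr k)) + of_bool (j \<in> Bmin) = (\<Sum>k<m. bag_count j (M k))"
  using sum_fun_upd_add[OF k0(1), of "bag_count j" M "remove_nth t0 (M k0)"]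
    bag_count_remove_nth[OF k0(2), of j] by simp

lemma pool_bag_count: "of_bool (j \<in> Bmin) + bag_count j (Mr k1) = of_bool (j \<in> pool)"
proof -
  have "bag_count j (Mr k1) \<le> (\<Sum>k<m. bag_count j (Mr k))"
    using k1(1) by (intro member_le_sum) auto
  moreover have "(\<Sum>k<m. bag_count j (M k)) \<le> 1"
    using partition by (simp add: bag_partition_def bag_count_all_bags)
  ultimately have "of_bool (j \<in> Bmin) + bag_count j (Mr k1) \<le> 1"
    using bag_count_Mr[of j] by linarith
  moreover have "j \<in> pool \<longleftrightarrow> j \<in> Bmin \<or> bag_count j (Mr k1) \<noteq> 0"
    by (auto simp: bag_count_eq_0_iff)
  ultimately show ?thesis
    by (cases "j \<in> Bmin") auto
qed

lemma pool_subset: "pool \<subseteq> {..<n}"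
  using bags_subset[OF k0(1) Bmin_in] bags_subset[OF k1(1)] set_Mr_subset by blast

lemma finite_pool: "finite pool"
  using pool_subset finite_subset by blast

lemma pool_nonneg: "\<forall>j\<in>pool. 0 \<le> p j"
  using pool_subset nonneg by blast

lemmas NB_length = lpt_length[OF lpt finite_pool pool_nonneg]
  and NB_bag_count = lpt_bag_count[OF lpt finite_pool pool_nonneg]
  and NB_subset = lpt_subset[OF lpt finite_pool pool_nonneg]
  and NB_balanced = lpt_bags_balanced[OF lpt finite_pool pool_nonneg]

lemma partition_rebalanced: "bag_partition n m (all_bags m M')"
proof -
  have "(\<Sum>k<m. length (Mr k)) + length (M k0) = (\<Sum>k<m. length (M k)) + length (remove_nth t0 (M k0))"
    by (rule sum_fun_upd_add[OF k0(1)])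
  moreover have "(\<Sum>k<m. length (M' k)) + length (Mr k1) = (\<Sum>k<m. length (Mr k)) + length NB"
    unfolding rebalanced_def by (rule sum_fun_upd_add[OF k1(1)])
  moreover have "length (remove_nth t0 (M k0)) + 1 = length (M k0)"
    using k0(2) by (simp add: length_remove_nth)
  ultimately have "(\<Sum>k<m. length (M' k)) = (\<Sum>k<m. length (M k))"
    using NB_length by linarith
  moreover have "(\<Sum>k<m. bag_count j (M' k)) = (\<Sum>k<m. bag_count j (M k))" for j
  proof -
    have "(\<Sum>k<m. bag_count j (M' k)) + bag_count j (Mr k1) = (\<Sum>k<m. bag_count j (Mr k)) + bag_count j NB"
      unfolding rebalanced_def by (rule sum_fun_upd_add[OF k1(1)])
    then show ?thesis
      using bag_count_Mr[of j] pool_bag_count[of j] NB_bag_count[of j] by linarith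
  qed
  ultimately show ?thesis
    using partition by (simp add: bag_partition_def length_all_bags bag_count_all_bags)
qed

lemma load_Mr: "load p Mr k = load p M k - (if k = k0 then psum p Bmin else 0)"
  using sum_list_map_remove_nth[OF k0(2), of "psum p"] by (simp add: load_def)

lemma sum_list_NB: "sum_list (map (psum p) NB) = psum p Bmin + load p Mr k1"
proof -
  have subset: "\<forall>B\<in>set (Mr k1). B \<subseteq> {..<n}"
    using bags_subset[OF k1(1)] set_Mr_subset by blast
  have "B \<subseteq> {..<n}" if "B \<in> set NB" for B
    using NB_subset[OF that] pool_subset by (rule subset_trans)
  then have "sum_list (map (psum p) NB) = (\<Sum>j<n. p j * bag_count j NB)"
    by (intro sum_list_psum_conv_sum) auto
  also have "\<dots> = (\<Sum>j<n. p j * of_bool (j \<in> Bmin) + p j * bag_count j (Mr k1))"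
  proof (rule sum.cong)
    fix j
    have "bag_count j NB = of_bool (j \<in> Bmin) + bag_count j (Mr k1)"
      by (metis NB_bag_count pool_bag_count)
    then show "p j * bag_count j NB = p j * of_bool (j \<in> Bmin) + p j * bag_count j (Mr k1)"
      by (simp add: distrib_left)
  qed simp
  also have "\<dots> = psum p Bmin + load p Mr k1"
  proof -
    have "psum p Bmin = (\<Sum>j<n. p j * of_bool (j \<in> Bmin))"
      using bags_subset[OF k0(1) Bmin_in] by (intro psum_conv_sum) auto
    moreover have "load p Mr k1 = (\<Sum>j<n. p j * bag_count j (Mr k1))"
      unfolding load_def using subset by (intro sum_list_psum_conv_sum) auto
    ultimately show ?thesis
      by (simp add: sum.distrib del: fun_upd_apply)
  qed
  finally show ?thesis .
qed

lemma load_rebalanced: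
  "load p M' k = load p M k + (if k = k1 then psum p Bmin else 0) - (if k = k0 then psum p Bmin else 0)"
proof -
  have "load p M' k = (if k = k1 then sum_list (map (psum p) NB) else load p Mr k)"
    by (simp add: load_def M'_apply)
  then show ?thesis
    using sum_list_NB load_Mr[of k] load_Mr[of k1] by simp
qed

lemma length_rebalanced: "length (M' k) + of_bool (k = k0) = length (M k) + of_bool (k = k1)"
proof -
  have "length (remove_nth t0 (M k0)) + 1 = length (M k0)"
    using k0(2) by (simp add: length_remove_nth)
  then show ?thesis
    using NB_length by (cases "k = k0"; cases "k = k1") (simp_all add: rebalanced_def)
qed

lemma set_rebalanced_subset: "k \<noteq> k1 \<Longrightarrow> set (M' k) \<subseteq> set (M k)"
  using set_Mr_subset by (simp add: M'_apply)

lemma rebalanced_min_bag: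
  assumes "bags_balanced p 2 (M k1)" "B \<in> set (all_bags m M')"
  shows "psum p Bmin \<le> psum p B"
proof -
  obtain k where k: "k < m" "B \<in> set (M' k)"
    using assms(2) by (auto simp: set_all_bags)
  show ?thesis
  proof (cases "k = k1")
    case True
    have "2 * psum p Bmin \<le> psum p G" if "G \<in> set (Mr k1)" for G
    proof -
      have "psum p Bmax \<le> 2 * psum p G"
        using assms(1) Bmax_in set_Mr_subset that max_bag(1) unfolding bags_balanced_def by blast
      then show ?thesis
        using gap by linarith
    qed
    then show ?thesis
      using lpt_psum_ge_if_split[OF lpt finite_pool pool_nonneg refl pool_bag_count refl] k True
      by (simp add: M'_apply)
  next
    case False
    then have "B \<in> set (all_bags m M)"
      using k set_rebalanced_subset by (auto simp: set_all_bags)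
    then show ?thesis
      using min_bag by blast
  qed
qed

lemma rebalanced_nonempty: "k < m \<Longrightarrow> M' k \<noteq> [] \<Longrightarrow> M k \<noteq> []"
  using k1(2) set_rebalanced_subset[of k] by (cases "k = k1") auto

lemma rebalance_invariant_step:
  assumes inv: "rebalance_invariant p m sh a T M" and m: "1 \<le> m" and sh: "\<forall>k<m. 0 \<le> sh k"
    and aT: "0 \<le> a * T" and accepted: "pred_makespan p m sh M' \<le> ereal (a * T)"
  shows "rebalance_invariant p m sh a T M'"
proof -
  obtain \<nu> where \<nu>: "\<forall>B\<in>set (all_bags m M). \<nu> \<le> psum p B"
    and load_bound: "\<forall>k<m. M k \<noteq> [] \<longrightarrow> load p M k \<le> T * sh k + (real (length (M k)) - 1) * \<nu>"
    using inv unfolding rebalance_invariant_def by blast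
  have balanced: "bags_balanced p 2 (M k)" if "k < m" for k
    using inv that unfolding rebalance_invariant_def by blast
  have "\<nu> \<le> psum p Bmin"
    using \<nu> Bmin_in_all_bags by blast
  have "\<forall>k<m. load p M' k \<le> a * T * sh k"
    using accepted pred_makespan_le_iff[OF m sh _ aT] load_nonneg[OF partition_rebalanced nonneg]
    by (simp add: mult.commute)
  moreover have "\<forall>k<m. bags_balanced p 2 (M' k)"
    using NB_balanced balanced set_rebalanced_subset bags_balanced_subset by (metis M'_apply)
  moreover have "load p M' k \<le> T * sh k + (real (length (M' k)) - 1) * psum p Bmin"
    if "k < m" "M' k \<noteq> []" for k
  proof -
    have "M k \<noteq> []"
      using rebalanced_nonempty that by blast
    then have "(real (length (M k)) - 1) * \<nu> \<le> (real (length (M k)) - 1) * psum p Bmin"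
      using \<open>\<nu> \<le> psum p Bmin\<close> by (intro mult_left_mono) (auto simp: Suc_le_eq)
    moreover have "load p M k \<le> T * sh k + (real (length (M k)) - 1) * \<nu>"
      using load_bound that(1) \<open>M k \<noteq> []\<close> by blast
    moreover have "(real (length (M' k)) - 1) * psum p Bmin = (real (length (M k)) - 1) * psum p Bmin
        + (if k = k1 then psum p Bmin else 0) - (if k = k0 then psum p Bmin else 0)"
    proof -
      have length': "real (length (M' k)) = real (length (M k)) + of_bool (k = k1) - of_bool (k = k0)"
        using arg_cong[OF length_rebalanced[of k], of real] by simp
      show ?thesis
        unfolding length' by (simp add: algebra_simps of_bool_def)
    qed
    ultimately show ?thesis
      using load_rebalanced[of k] by linarith
  qed
  ultimately show ?thesis
    unfolding rebalance_invariant_def using rebalanced_min_bag balanced k1(1) by blast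
qed

lemma rebalance_reject_balanced:
  assumes inv: "rebalance_invariant p m sh a T M" and m: "1 \<le> m" and sh: "\<forall>k<m. 0 \<le> sh k"
    and T: "0 \<le> T" and a: "1 < a" and rejected: "ereal (a * T) < pred_makespan p m sh M'"
  shows "bags_balanced p (2 * a / (a - 1)) (all_bags m M)"
proof -
  obtain \<nu> where \<nu>: "\<forall>B\<in>set (all_bags m M). \<nu> \<le> psum p B"
    and load_bound: "\<forall>k<m. M k \<noteq> [] \<longrightarrow> load p M k \<le> T * sh k + (real (length (M k)) - 1) * \<nu>"
    and load_le: "\<forall>k<m. load p M k \<le> a * T * sh k" and balanced: "bags_balanced p 2 (M k1)"
    using inv k1(1) unfolding rebalance_invariant_def by blast
  have "\<not> pred_makespan p m sh M' \<le> ereal (a * T)"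
    using rejected by simp
  then obtain k where k: "k < m" "a * T * sh k < load p M' k"
    using pred_makespan_le_iff[OF m sh _] load_nonneg[OF partition_rebalanced nonneg] a T
    by (auto simp: mult.commute not_le)
  have "k = k1 \<and> k1 \<noteq> k0"
    using k load_le load_rebalanced[of k] psum_bag_nonneg[OF k0(1) Bmin_in]
    by (cases "k = k1"; cases "k = k0") force+
  define l where "l = real (length (M k1))"
  have l: "1 \<le> l"
    using k1(2) unfolding l_def by linarith
  have "a * T * sh k1 < psum p Bmin + load p M k1"
    using k load_rebalanced[of k1] \<open>k = k1 \<and> k1 \<noteq> k0\<close> by simp
  moreover have "load p M k1 \<le> T * sh k1 + (l - 1) * \<nu>"
    using load_bound k1 unfolding l_def by auto
  moreover have "(l - 1) * \<nu> \<le> (l - 1) * psum p Bmin"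
    using \<nu> Bmin_in_all_bags l by (intro mult_left_mono) auto
  ultimately have below: "(a - 1) * (T * sh k1) < l * psum p Bmin"
    by (simp add: algebra_simps)
  have "l * psum p Bmax \<le> 2 * load p M k1"
    using bags_balanced_length_mult_le[OF balanced Bmax_in max_bag(1)] unfolding l_def load_def .
  also have "\<dots> \<le> 2 * a * (T * sh k1)"
    using load_le k1(1) by (simp add: mult.assoc)
  finally have Bmax_le: "psum p Bmax \<le> 2 * a / (a - 1) * psum p Bmin"
    using overload_ratio_le[OF a l below] by blast
  show ?thesis
    unfolding bags_balanced_def
  proof (intro ballI impI)
    fix A B assume "A \<in> set (all_bags m M)" "B \<in> set (all_bags m M)" "2 \<le> card A"
    then have "psum p A \<le> psum p Bmax" "psum p Bmin \<le> psum p B"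
      using max_bag(2) min_bag by blast+
    moreover have "0 \<le> 2 * a / (a - 1)"
      using a by simp
    ultimately show "psum p A \<le> 2 * a / (a - 1) * psum p B"
      using Bmax_le by (meson mult_left_mono order_trans)
  qed
qed

end

lemma lpt_rebalance_step:
  assumes "lpt_rebalance p m M M'" "loop_cond p m 4 M"
    and "bag_partition n m (all_bags m M)" "\<forall>j<n. 0 \<le> p j"
  obtains k0 t0 k1 t1 NB where "rebalance_step p n m M k0 t0 k1 t1 NB" "M' = rebalanced M k0 t0 k1 NB"
proof -
  obtain k0 t0 k1 t1 NB where k0: "k0 < m" "t0 < length (M k0)" and k1: "k1 < m" "t1 < length (M k1)"
    and min: "\<forall>B\<in>set (all_bags m M). psum p (M k0 ! t0) \<le> psum p B"
    and max: "2 \<le> card (M k1 ! t1)" "\<forall>B\<in>set (all_bags m M). 2 \<le> card B \<longrightarrow> psum p B \<le> psum p (M k1 ! t1)"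
    and lpt: "lpt p (M k0 ! t0 \<union> \<Union>(set ((M(k0 := remove_nth t0 (M k0))) k1)))
       (length ((M(k0 := remove_nth t0 (M k0))) k1) + 1) NB"
    and M': "M' = (M(k0 := remove_nth t0 (M k0)))(k1 := NB)"
    using lpt_rebalanceE[OF assms(1)] by blast
  have "4 * psum p (M k0 ! t0) < psum p (M k1 ! t1)"
    using loop_cond_gap[OF assms(2) nth_in_all_bags[where M=M, OF k0] min nth_in_all_bags[where M=M, OF k1] max] .
  then have "rebalance_step p n m M k0 t0 k1 t1 NB"
    using assms(3,4) k0 k1 min max lpt by unfold_locales
  then show ?thesis
    using that M' by (simp add: rebalanced_def)
qed

lemma ipr_loop_balanced:
  assumes "ipr_loop p m sh \<alpha> \<rho> oc M out" "\<rho> = 4" "0 < \<alpha>" "\<alpha> \<le> 1" "1 \<le> m"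
    "\<forall>j<n. 0 \<le> p j" "\<forall>k<m. 0 \<le> sh k" "bag_partition n m (all_bags m M)"
    "oc = \<infinity> \<or> (\<exists>T. oc = ereal T \<and> 0 \<le> T \<and> rebalance_invariant p m sh (1 + \<alpha>) T M)"
  shows "bag_partition n m out \<and> bags_balanced p (2 + 2 / \<alpha>) out"
  using assms
proof (induction rule: ipr_loop.induct)
  case (loop_stop p m \<rho> M sh \<alpha> oc)
  have "bags_balanced p 4 (all_bags m M)"
    using not_loop_cond_balanced loop_stop by simp
  moreover have "4 \<le> 2 + 2 / \<alpha>"
    using loop_stop by (simp add: field_simps)
  ultimately show ?case
    using loop_stop bags_balanced_mono bag_partition_psum_nonneg by blast
next
  case (loop_reject p m \<rho> M M' sh \<alpha> oc)
  obtain k0 t0 k1 t1 NB where step: "rebalance_step p n m M k0 t0 k1 t1 NB"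
    and M': "M' = rebalanced M k0 t0 k1 NB"
    using lpt_rebalance_step loop_reject by metis
  have "oc \<noteq> \<infinity>"
    using loop_reject by auto
  then obtain T where T: "oc = ereal T" "0 \<le> T" and inv: "rebalance_invariant p m sh (1 + \<alpha>) T M"
    using loop_reject by blast
  have "bags_balanced p (2 * (1 + \<alpha>) / (1 + \<alpha> - 1)) (all_bags m M)"
    using rebalance_step.rebalance_reject_balanced[OF step inv] loop_reject T M' by simp
  moreover have "2 * (1 + \<alpha>) / (1 + \<alpha> - 1) = 2 + 2 / \<alpha>"
    using loop_reject by (simp add: field_simps)
  ultimately show ?case
    using loop_reject by simp
next
  case (loop_step p m \<rho> M M' sh \<alpha> oc out)
  obtain k0 t0 k1 t1 NB where step: "rebalance_step p n m M k0 t0 k1 t1 NB"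
    and M': "M' = rebalanced M k0 t0 k1 NB"
    using lpt_rebalance_step loop_step by metis
  have "oc = \<infinity> \<or> (\<exists>T. oc = ereal T \<and> 0 \<le> T \<and> rebalance_invariant p m sh (1 + \<alpha>) T M')"
    using rebalance_step.rebalance_invariant_step[OF step] loop_step M' by fastforce
  then show ?case
    using loop_step rebalance_step.partition_rebalanced[OF step] M' by blast
qed

lemma bag_partition_initial:
  assumes sub: "\<forall>i<m. B i \<subseteq> {0..<n}" and disjoint: "\<forall>i<m. \<forall>k<m. i \<noteq> k \<longrightarrow> B i \<inter> B k = {}"
    and cover: "(\<Union>i\<in>{0..<m}. B i) = {0..<n}"
  shows "bag_partition n m (all_bags m (\<lambda>i. [B i]))"
proof -
  have "(\<Sum>k<m. of_bool (j \<in> B k)) = (of_bool (j < n) :: nat)" for j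
  proof (cases "j < n")
    case True
    then have "j \<in> (\<Union>i\<in>{0..<m}. B i)"
      using cover by simp
    then obtain k0 where k0: "k0 < m" "j \<in> B k0"
      by auto
    have "(\<Sum>k<m. of_bool (j \<in> B k)) = (\<Sum>k\<in>{k0}. of_bool (j \<in> B k) :: nat)"
      using k0 disjoint by (intro sum.mono_neutral_right) auto
    then show ?thesis
      using k0 True by simp
  next
    case False
    then have "j \<notin> B k" if "k < m" for k
      using sub that by (meson atLeastLessThan_iff subsetD)
    then show ?thesis
      using False by simp
  qed
  then show ?thesis
    by (simp add: bag_partition_def length_all_bags bag_count_all_bags)
qed

lemma rebalance_invariant_initial:
  assumes "\<forall>i<m. psum p (B i) \<le> T * sh i" "\<forall>i<m. 0 \<le> psum p (B i)"
    and "0 \<le> \<alpha>" "0 \<le> T" "\<forall>i<m. 0 \<le> sh i"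
  shows "rebalance_invariant p m sh (1 + \<alpha>) T (\<lambda>i. [B i])"
proof -
  have "psum p (B k) \<le> (1 + \<alpha>) * T * sh k" if "k < m" for k
  proof -
    have "0 \<le> \<alpha> * (T * sh k)" "psum p (B k) \<le> T * sh k"
      using assms that by simp_all
    moreover have "(1 + \<alpha>) * T * sh k = T * sh k + \<alpha> * (T * sh k)"
      by (simp add: algebra_simps)
    ultimately show ?thesis
      by linarith
  qed
  moreover have "\<forall>B'\<in>set (all_bags m (\<lambda>i. [B i])). 0 \<le> psum p B'"
    using assms(2) by (auto simp: set_all_bags)
  ultimately show ?thesis
    using assms(1,2) unfolding rebalance_invariant_def bags_balanced_def load_def by fastforce
qed

lemma Max_ratio_cases:
  fixes m :: nat and x y :: "nat \<Rightarrow> real"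
  assumes "1 \<le> m" "\<forall>i<m. 0 \<le> x i" "\<forall>i<m. 0 \<le> y i"
  shows "Max ((\<lambda>i. ratio (x i) (y i)) ` {0..<m}) = \<infinity> \<or>
    (\<exists>T. Max ((\<lambda>i. ratio (x i) (y i)) ` {0..<m}) = ereal T \<and> 0 \<le> T \<and> (\<forall>i<m. x i \<le> T * y i))"
proof -
  define R where "R = Max ((\<lambda>i. ratio (x i) (y i)) ` {0..<m})"
  have ratio_le: "ratio (x i) (y i) \<le> R" if "i < m" for i
  proof -
    have "ratio (x i) (y i) \<in> (\<lambda>i. ratio (x i) (y i)) ` {0..<m}"
      using that by (intro rev_image_eqI[of i]) auto
    then show ?thesis
      unfolding R_def by (intro Max_ge) simp_all
  qed
  have "0 \<le> ratio (x 0) (y 0)"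
    using assms by (simp add: ratio_def)
  then have "0 \<le> R"
    using ratio_le[of 0] assms(1) by simp
  moreover have "x i \<le> T * y i" if "R = ereal T" "0 \<le> T" "i < m" for T i
    using ratio_le[OF that(3)] ratio_le_iff[of "x i" "y i" T] that assms by simp
  ultimately show ?thesis
    unfolding R_def[symmetric] by (cases R) auto
qed

lemma ipr_core_balanced:
  assumes core: "ipr_core p n m sh optv \<alpha> \<epsilon> 4 bags" and \<alpha>: "0 < \<alpha>" "\<alpha> \<le> 1" and m: "1 \<le> m"
    and p: "\<forall>j<n. 0 \<le> p j" and sh: "\<forall>i<m. 0 \<le> sh i"
  shows "bag_partition n m bags \<and> bags_balanced p (2 + 2 / \<alpha>) bags"
proof -
  obtain B where "\<forall>i<m. B i \<subseteq> {0..<n}" "\<forall>i<m. \<forall>k<m. i \<noteq> k \<longrightarrow> B i \<inter> B k = {}"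
    "(\<Union>i\<in>{0..<m}. B i) = {0..<n}"
    and loop: "ipr_loop p m sh \<alpha> 4 (Max ((\<lambda>i. ratio (psum p (B i)) (sh i)) ` {0..<m})) (\<lambda>i. [B i]) bags"
    using core unfolding ipr_core_def by (elim exE conjE)
  then have partition: "bag_partition n m (all_bags m (\<lambda>i. [B i]))"
    by (intro bag_partition_initial)
  have B: "\<forall>i<m. 0 \<le> psum p (B i)"
  proof (intro allI impI)
    fix i assume "i < m"
    then have "B i \<in> set (all_bags m (\<lambda>i. [B i]))"
      by (auto simp: set_all_bags)
    then show "0 \<le> psum p (B i)"
      using bag_partition_psum_nonneg[OF partition p] by blast
  qed
  define OC where "OC = Max ((\<lambda>i. ratio (psum p (B i)) (sh i)) ` {0..<m})"
  from Max_ratio_cases[OF m B sh]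
  have "OC = \<infinity> \<or> (\<exists>T. OC = ereal T \<and> 0 \<le> T \<and> rebalance_invariant p m sh (1 + \<alpha>) T (\<lambda>i. [B i]))"
    unfolding OC_def[symmetric]
  proof (elim disjE exE conjE)
    fix T assume "OC = ereal T" "0 \<le> T" "\<forall>i<m. psum p (B i) \<le> T * sh i"
    then show ?thesis
      using rebalance_invariant_initial[OF _ B _ _ sh] \<alpha> by (intro disjI2 exI[of _ T]) simp
  qed simp
  then show ?thesis
    using ipr_loop_balanced[OF loop[folded OC_def] refl \<alpha> m p sh partition] by simp
qed

theorem lemma8:
  fixes \<epsilon> \<alpha> :: real
  assumes "0 < \<epsilon>" "\<epsilon> < 1" "0 < \<alpha>" "\<alpha> < 1"
  shows "robust (\<lambda>p n m shat bags. ipr p n m shat \<alpha> \<epsilon> 4 bags) (2 + 2 / \<alpha>)"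
  unfolding robust_def
proof (intro allI impI, elim conjE)
  fix p :: "nat \<Rightarrow> real" and n m :: nat and shat s :: "nat \<Rightarrow> real" and bags :: "nat set list"
  assume m: "1 \<le> m" and p: "\<forall>j<n. 0 \<le> p j" and shat: "\<forall>i<m. 0 \<le> shat i" and s: "\<forall>i<m. 0 < s i"
    and "ipr p n m shat \<alpha> \<epsilon> 4 bags"
  then obtain \<pi> where \<pi>: "bij_betw \<pi> {0..<m} {0..<m}"
    and core: "ipr_core p n m (shat \<circ> \<pi>) (opt p shat n m) \<alpha> \<epsilon> 4 bags"
    unfolding ipr_def by (elim exE conjE)
  have "\<forall>i<m. 0 \<le> (shat \<circ> \<pi>) i"
    using \<pi> shat by (auto dest: bij_betwE)
  then have "bag_partition n m bags \<and> bags_balanced p (2 + 2 / \<alpha>) bags"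
    using ipr_core_balanced[OF core] assms(3,4) m p by simp
  then show "opt_bags p s m bags \<le> ereal (2 + 2 / \<alpha>) * opt p s n m"
    using opt_bags_le_if_balanced[OF m s p] assms(3) by simp
qed

end
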